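(* Let $S,I:\mathbb{R}\to\mathbb{R}$ be $2\pi$-periodic Lipschitz functions and suppose there are $\alpha_0\in(0,\pi)$, $p,q\ge1$, $c_1,c_2>0$, $c_3\in(0,1]$ with $S(\theta)\le-c_1(\pi-\theta)^p$ for $\theta\in[\alpha_0,\pi]$, $S(\theta)\ge c_1(\theta+\pi)^p$ for $\theta\in[-\pi,-\alpha_0]$, $0\le I(\theta)\le c_2(\pi-|\theta|)^q$ for $\theta\in[-\pi,\pi]$, and $\min_{|\phi|\le\max\{|\theta|,\alpha_0\}}I(\phi)\ge c_3I(\theta)$ for $\theta\in[-\pi,\pi]$. Let $\omega_1,\dots,\omega_N\in\mathbb{R}$, $\|\Omega\|_\infty=\max_i|\omega_i|$, and for initial data $(\theta_i^0)$ let $(\theta_i(t))$ solve $\dot\theta_i=\omega_i+\frac{\kappa}{N}\sum_{j=1}^NI(\theta_j)S(\theta_i)$, $\theta_i(0)=\theta_i^0$, with $R(t)=\frac1N\sum_jI(\theta_j(t))$. Let $\mu$ be a probability measure on $[-\pi,\pi]$ with $R^*:=\int_{-\pi}^\pi I\,d\mu>0$, and assume \[ \kappa>\max\left\{\frac{4(4c_2)^{p/q}}{c_1c_3}\cdot\frac{\|\Omega\|_\infty}{(R^* )^{1+p/q}},\ \frac{4}{c_1c_3(\pi-\alpha_0)^p}\cdot\frac{\|\Omega\|_\infty}{R^*}\right\}. \] Then, with $\mu^{\otimes N}$ the product measure on $[-\pi,\pi]^N$, \[ \mu^{\otimes N}\Big\{(\theta_i^0)\in[-\pi,\pi]^N: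 R(t)>\tfrac{c_3R^*}{4}\ \forall t\ge0,\ \sup_{t\ge0}\theta_i(t)-\inf_{t\ge0}\theta_i(t)<2\pi\ \forall i\Big\}\ge1-\exp\left(-\frac{(R^* )^2N}{2\|I\|_{\sup}^2}\right). \]
   Context: $\|I\|_{\sup}=\sup_\theta|I(\theta)|$. *)

theory Defs
  imports "HOL-Probability.Probability"
begin

definition is_solution ::
  "(real \<Rightarrow> real) \<Rightarrow> (real \<Rightarrow> real) \<Rightarrow> nat \<Rightarrow> (nat \<Rightarrow> real) \<Rightarrow> real
     \<Rightarrow> (nat \<Rightarrow> real) \<Rightarrow> (real \<Rightarrow> nat \<Rightarrow> real) \<Rightarrow> bool" where
  "is_solution S I N \<omega> \<kappa> x0 \<theta> \<longleftrightarrow>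
     (\<forall>i<N. \<theta> 0 i = x0 i) \<and>
     (\<forall>i<N. \<forall>t\<ge>0. ((\<lambda>s. \<theta> s i) has_real_derivative
         (\<omega> i + \<kappa> / real N * (\<Sum>j<N. I (\<theta> t j)) * S (\<theta> t i))) (at t within {0..}))"

definition order_param :: "(real \<Rightarrow> real) \<Rightarrow> nat \<Rightarrow> (nat \<Rightarrow> real) \<Rightarrow> real" where
  "order_param I N th = (\<Sum>j<N. I (th j)) / real N"

definition sup_norm :: "(real \<Rightarrow> real) \<Rightarrow> real" where
  "sup_norm I = (SUP \<theta>. \<bar>I \<theta>\<bar>)"

end

theory Submission
  imports Defs
begin

(*
  Choose delta > 0 so that, whenever R(t) > c3 R*/4, the coupling term kappa R(t) S(theta) beats every
  natural frequency on the arcs [alpha0, pi - delta] and [-pi + delta, -alpha0] (mod 2 pi): there the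
  drift points away from pi, so a phase can cross these arcs only towards 0. A phase starting in
  [-pi + delta, pi - delta] therefore stays in [-b, b] with b = max |theta_i(0)| alpha0, where
  I >= c3 I(theta_i(0)), while a phase starting within delta of pi contributes at most R*/4 to R(0).
  Hence R(0) > R*/2 implies R(t) > c3 R*/4 for all t (a first-failure-time argument), and the same
  barriers confine each phase to an interval of length less than 2 pi. Hoeffding's inequality bounds
  the probability of R(0) <= R*/2. The event is measurable because the solution is unique, depends
  continuously on the initial data, and both conditions can be tested at rational times.
*)

section \<open>Barriers and continuous induction on the time axis\<close>

lemma barrier_upper:
  fixes f :: "real \<Rightarrow> real"
  assumes cont: "continuous_on {a..t} f" and "a \<le> t" and "f a \<le> b" and "{a..} \<subseteq> X"
    and crossing: "\<And>s. a \<le> s \<Longrightarrow> s < t \<Longrightarrow> f s = b \<Longrightarrow>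
        \<exists>v<0. (f has_real_derivative v) (at s within X)"
  shows "f t \<le> b"
proof (rule ccontr)
  assume "\<not> f t \<le> b"
  hence ft: "b < f t" by simp
  define K where "K = {s \<in> {a..t}. f s = b}"
  have "K \<noteq> {}"
    using IVT'[of f a b t] assms ft by (auto simp: K_def)
  moreover have bdd: "bdd_above K"
    unfolding K_def by (rule bdd_aboveI[of _ t]) auto
  moreover have "closed K"
    unfolding K_def by (rule continuous_closed_preimage_constant[OF cont]) simp
  ultimately have "Sup K \<in> K"
    by (rule closed_contains_Sup)
  then obtain s where s: "s = Sup K" "a \<le> s" "s \<le> t" "f s = b"
    by (auto simp: K_def)
  with ft have "s < t" by (cases "s = t") auto
  \<comment> \<open>\<open>s\<close> is the last time at level \<open>b\<close>, so \<open>f\<close> lies above \<open>b\<close> right after \<open>s\<close>\<close>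
  have above: "b < f y" if y: "s < y" "y \<le> t" for y
  proof (rule ccontr)
    assume "\<not> b < f y"
    moreover have "continuous_on {y..t} f"
      by (rule continuous_on_subset[OF cont]) (use y s in auto)
    ultimately obtain z where "y \<le> z" "z \<le> t" "f z = b"
      using IVT'[of f y b t] ft y by auto
    moreover from this have "z \<in> K"
      using y s by (auto simp: K_def)
    ultimately show False
      using cSup_upper[OF _ bdd, of z] s y by simp
  qed
  obtain v where "v < 0" "(f has_real_derivative v) (at s within X)"
    using crossing[OF s(2) \<open>s < t\<close> s(4)] by blast
  then obtain d where "0 < d" and d: "\<And>h. 0 < h \<Longrightarrow> s + h \<in> X \<Longrightarrow> h < d \<Longrightarrow> f (s + h) < f s"
    using has_real_derivative_neg_dec_right by blast
  define h where "h = min d (t - s) / 2"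
  have "0 < h" "h < d" "s + h \<le> t"
    using \<open>0 < d\<close> \<open>s < t\<close> by (auto simp: h_def min_def field_simps)
  moreover have "s + h \<in> X"
    using \<open>0 < h\<close> s(2) assms(4) by auto
  ultimately show False
    using d[of h] above[of "s + h"] s(4) by simp
qed

lemma barrier_lower:
  fixes f :: "real \<Rightarrow> real"
  assumes cont: "continuous_on {a..t} f" and "a \<le> t" and "b \<le> f a" and "{a..} \<subseteq> X"
    and crossing: "\<And>s. a \<le> s \<Longrightarrow> s < t \<Longrightarrow> f s = b \<Longrightarrow>
        \<exists>v>0. (f has_real_derivative v) (at s within X)"
  shows "b \<le> f t"
proof -
  have "- f t \<le> - b"
  proof (rule barrier_upper[where f="\<lambda>x. - f x" and X=X])
    fix s assume "a \<le> s" "s < t" "- f s = - b"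
    then obtain v where "0 < v" "(f has_real_derivative v) (at s within X)"
      using crossing by force
    thus "\<exists>v<0. ((\<lambda>x. - f x) has_real_derivative v) (at s within X)"
      by (intro exI[of _ "- v"]) (auto intro!: derivative_eq_intros)
  qed (use assms in \<open>auto intro: continuous_intros\<close>)
  thus ?thesis by simp
qed

lemma continuous_bootstrap_gt:
  fixes g :: "real \<Rightarrow> real"
  assumes cont: "continuous_on {0..} g"
    and step: "\<And>T. 0 \<le> T \<Longrightarrow> (\<And>s. 0 \<le> s \<Longrightarrow> s < T \<Longrightarrow> c < g s) \<Longrightarrow> c < g T"
    and "0 \<le> t"
  shows "c < g t"
proof (rule ccontr)
  assume "\<not> c < g t"
  define Z where "Z = {0..} \<inter> g -` {..c}"
  have "Z \<noteq> {}"
    using \<open>\<not> c < g t\<close> \<open>0 \<le> t\<close> by (auto simp: Z_def)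
  moreover have bdd: "bdd_below Z"
    by (rule bdd_belowI[of _ 0]) (auto simp: Z_def)
  moreover have "closed Z"
    unfolding Z_def by (rule continuous_closed_preimage[OF cont]) auto
  ultimately have "Inf Z \<in> Z"
    by (rule closed_contains_Inf)
  moreover have "c < g s" if "0 \<le> s" "s < Inf Z" for s
    using cInf_lower[OF _ bdd, of s] that by (force simp: Z_def)
  ultimately show False
    using step[of "Inf Z"] by (auto simp: Z_def)
qed

lemma bounded_range_SUP_INF:
  fixes f :: "'a \<Rightarrow> real"
  assumes "A \<noteq> {}" and bounds: "\<And>t. t \<in> A \<Longrightarrow> lo \<le> f t \<and> f t \<le> hi"
  shows "bdd_above (f ` A)" "bdd_below (f ` A)" "(SUP t\<in>A. f t) - (INF t\<in>A. f t) \<le> hi - lo"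
proof -
  show "bdd_above (f ` A)" "bdd_below (f ` A)"
    using bounds by (meson bdd_aboveI2 bdd_belowI2)+
  have "(SUP t\<in>A. f t) \<le> hi" "lo \<le> (INF t\<in>A. f t)"
    using assms by (auto intro: cSUP_least cINF_greatest)
  thus "(SUP t\<in>A. f t) - (INF t\<in>A. f t) \<le> hi - lo" by simp
qed

section \<open>Periodic functions\<close>

lemma periodic_shift_int:
  fixes f :: "real \<Rightarrow> 'a"
  assumes per: "\<forall>x. f (x + 2 * pi) = f x"
  shows "f (x + 2 * pi * of_int k) = f x"
proof -
  have shift_nat: "f (y + 2 * pi * real n) = f y" for y n
  proof (induction n)
    case (Suc n)
    have "f (y + 2 * pi * real (Suc n)) = f ((y + 2 * pi * real n) + 2 * pi)"
      by (simp add: algebra_simps)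
    thus ?case using per Suc by simp
  qed simp
  show ?thesis
  proof (cases "0 \<le> k")
    case True
    thus ?thesis using shift_nat[of x "nat k"] by simp
  next
    case False
    thus ?thesis using shift_nat[of "x + 2 * pi * of_int k" "nat (- k)"] by simp
  qed
qed

lemma periodic_range:
  fixes f :: "real \<Rightarrow> 'a"
  assumes per: "\<forall>x. f (x + 2 * pi) = f x"
  shows "range f = f ` {-pi..pi}"
proof -
  have "f x \<in> f ` {-pi..pi}" for x
  proof -
    define k where "k = \<lfloor>(x + pi) / (2 * pi)\<rfloor>"
    have "of_int k * (2 * pi) \<le> x + pi" "x + pi < (of_int k + 1) * (2 * pi)"
      using floor_divide_lower[of "2 * pi" "x + pi"] floor_divide_upper[of "2 * pi" "x + pi"]
      by (simp_all add: k_def)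
    hence "x - 2 * pi * of_int k \<in> {-pi..pi}"
      by (simp add: algebra_simps)
    moreover have "f x = f (x - 2 * pi * of_int k)"
      using periodic_shift_int[OF per, of "x - 2 * pi * of_int k" k] by simp
    ultimately show ?thesis by blast
  qed
  thus ?thesis by auto
qed

lemma periodic_continuous_bounded:
  fixes f :: "real \<Rightarrow> real"
  assumes "continuous_on UNIV f" and "\<forall>x. f (x + 2 * pi) = f x"
  shows "bounded (range f)"
  unfolding periodic_range[OF assms(2)]
  by (intro compact_imp_bounded compact_continuous_image continuous_on_subset[OF assms(1)]) auto

section \<open>Picard iteration for bounded Lipschitz vector fields\<close>

lemma integral_exp_scaled:
  fixes c t :: real
  assumes "c \<noteq> 0" "0 \<le> t"
  shows "integral {0..t} (\<lambda>s. exp (c * s)) = (exp (c * t) - 1) / c"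
proof -
  have "((\<lambda>s. exp (c * s)) has_integral (exp (c * t) / c - exp (c * 0) / c)) {0..t}"
  proof (rule fundamental_theorem_of_calculus[OF assms(2)])
    fix x assume "x \<in> {0..t}"
    have "((\<lambda>s. exp (c * s) / c) has_real_derivative exp (c * x)) (at x within {0..t})"
      using assms(1) by (auto intro!: derivative_eq_intros)
    thus "((\<lambda>s. exp (c * s) / c) has_vector_derivative exp (c * x)) (at x within {0..t})"
      by (simp add: has_real_derivative_iff_has_vector_derivative)
  qed
  thus ?thesis by (simp add: integral_unique diff_divide_distrib)
qed

lemma gronwall_has_derivative:
  fixes g g' :: "real \<Rightarrow> real"
  assumes deriv: "\<And>s. 0 \<le> s \<Longrightarrow> (g has_real_derivative g' s) (at s within {0..})"
    and growth: "\<And>s. 0 \<le> s \<Longrightarrow> g' s \<le> c * g s" and "0 \<le> t"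
  shows "g t \<le> exp (c * t) * g 0"
proof -
  define h where "h s = exp (- (c * s)) * g s" for s
  have h_deriv: "(h has_real_derivative exp (- (c * s)) * (g' s - c * g s)) (at s within {0..})"
    if "0 \<le> s" for s
    unfolding h_def using deriv[OF that]
    by (auto intro!: derivative_eq_intros simp: algebra_simps)
  have "continuous_on {0..} h"
    by (rule has_derivative_continuous_on) (use h_deriv in \<open>auto simp: has_field_derivative_def\<close>)
  hence "continuous_on {0..t} h"
    by (rule continuous_on_subset) auto
  have "h t \<le> h 0"
  proof (rule DERIV_nonpos_imp_decreasing_open[OF \<open>0 \<le> t\<close> _ \<open>continuous_on {0..t} h\<close>])
    fix s :: real assume "0 < s" "s < t"
    have "at s within {0..} = at s"
      using \<open>0 < s\<close> by (intro at_within_interior) simp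
    thus "\<exists>y. (h has_real_derivative y) (at s) \<and> y \<le> 0"
      using h_deriv[of s] growth[of s] \<open>0 < s\<close> by (auto intro!: mult_nonneg_nonpos)
  qed
  thus ?thesis
    by (simp add: h_def exp_minus field_simps)
qed

lemma sum_squares_le_square_sum_abs:
  fixes e :: "'a \<Rightarrow> real"
  assumes "finite A"
  shows "(\<Sum>i\<in>A. (e i)\<^sup>2) \<le> (\<Sum>i\<in>A. \<bar>e i\<bar>)\<^sup>2"
proof -
  have "(e i)\<^sup>2 \<le> \<bar>e i\<bar> * (\<Sum>j\<in>A. \<bar>e j\<bar>)" if "i \<in> A" for i
  proof -
    have "\<bar>e i\<bar> \<le> (\<Sum>j\<in>A. \<bar>e j\<bar>)"
      by (rule member_le_sum) (use assms that in auto)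
    hence "\<bar>e i\<bar> * \<bar>e i\<bar> \<le> \<bar>e i\<bar> * (\<Sum>j\<in>A. \<bar>e j\<bar>)"
      by (rule mult_left_mono) simp
    thus ?thesis by (simp add: power2_eq_square)
  qed
  hence "(\<Sum>i\<in>A. (e i)\<^sup>2) \<le> (\<Sum>i\<in>A. \<bar>e i\<bar> * (\<Sum>j\<in>A. \<bar>e j\<bar>))"
    by (rule sum_mono)
  thus ?thesis by (simp add: power2_eq_square sum_distrib_right)
qed

definition ode_solution ::
  "((nat \<Rightarrow> real) \<Rightarrow> nat \<Rightarrow> real) \<Rightarrow> nat \<Rightarrow> (nat \<Rightarrow> real) \<Rightarrow> (real \<Rightarrow> nat \<Rightarrow> real) \<Rightarrow> bool"
  where
  "ode_solution F N x0 \<theta> \<longleftrightarrow> (\<forall>i<N. \<theta> 0 i = x0 i) \<and>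
     (\<forall>i<N. \<forall>t\<ge>0. ((\<lambda>s. \<theta> s i) has_real_derivative F (\<theta> t) i) (at t within {0..}))"

primrec picard_iter ::
  "((nat \<Rightarrow> real) \<Rightarrow> nat \<Rightarrow> real) \<Rightarrow> (nat \<Rightarrow> real) \<Rightarrow> nat \<Rightarrow> real \<Rightarrow> nat \<Rightarrow> real"
  where
  "picard_iter F x0 0 = (\<lambda>t i. x0 i)"
| "picard_iter F x0 (Suc k) = (\<lambda>t i. x0 i + integral {0..t} (\<lambda>s. F (picard_iter F x0 k s) i))"

locale bounded_lipschitz_field =
  fixes N :: nat and F :: "(nat \<Rightarrow> real) \<Rightarrow> nat \<Rightarrow> real" and B L :: real
  assumes field_bounded: "i < N \<Longrightarrow> \<bar>F \<theta> i\<bar> \<le> B"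
    and field_lipschitz: "(\<Sum>i<N. \<bar>F \<theta> i - F \<eta> i\<bar>) \<le> L * (\<Sum>j<N. \<bar>\<theta> j - \<eta> j\<bar>)"
    and lipschitz_nonneg: "0 \<le> L"
begin

lemma field_tendsto:
  assumes "\<And>j. j < N \<Longrightarrow> ((\<lambda>x. X x j) \<longlongrightarrow> Y j) net" "i < N"
  shows "((\<lambda>x. F (X x) i) \<longlongrightarrow> F Y i) net"
proof -
  have "((\<lambda>x. \<Sum>j<N. \<bar>X x j - Y j\<bar>) \<longlongrightarrow> (\<Sum>j<N. \<bar>Y j - Y j\<bar>)) net"
    by (intro tendsto_sum tendsto_rabs tendsto_diff assms(1) tendsto_const) simp
  hence lim: "((\<lambda>x. L * (\<Sum>j<N. \<bar>X x j - Y j\<bar>)) \<longlongrightarrow> 0) net"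
    by (simp add: tendsto_mult_right_zero)
  have "\<forall>x. norm (F (X x) i - F Y i) \<le> L * (\<Sum>j<N. \<bar>X x j - Y j\<bar>)"
  proof
    fix x
    have "\<bar>F (X x) i - F Y i\<bar> \<le> (\<Sum>i<N. \<bar>F (X x) i - F Y i\<bar>)"
      by (rule member_le_sum) (use assms(2) in auto)
    thus "norm (F (X x) i - F Y i) \<le> L * (\<Sum>j<N. \<bar>X x j - Y j\<bar>)"
      using field_lipschitz[of "X x" Y] by simp
  qed
  from Lim_null_comparison[OF always_eventually[OF this] lim] show ?thesis
    by (rule LIM_zero_cancel)
qed

lemma field_continuous_on:
  assumes "\<And>j. j < N \<Longrightarrow> continuous_on A (\<lambda>s. \<theta> s j)" "i < N"
  shows "continuous_on A (\<lambda>s. F (\<theta> s) i)"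
  unfolding continuous_on_def
proof
  fix s assume "s \<in> A"
  show "((\<lambda>s. F (\<theta> s) i) \<longlongrightarrow> F (\<theta> s) i) (at s within A)"
    by (rule field_tendsto[OF _ assms(2)]) (use assms(1) \<open>s \<in> A\<close> in \<open>auto simp: continuous_on_def\<close>)
qed

lemma N_bound_nonneg: "0 \<le> real N * B"
proof (cases "N = 0")
  case False
  hence "\<bar>F \<theta> 0\<bar> \<le> B" for \<theta>
    by (intro field_bounded) simp
  hence "0 \<le> B" using abs_ge_zero order_trans by blast
  thus ?thesis by simp
qed simp

lemma picard_continuous_on: "i < N \<Longrightarrow> continuous_on {0..T} (\<lambda>t. picard_iter F x0 k t i)"
proof (induction k arbitrary: i)
  case (Suc k)
  have "continuous_on {0..T} (\<lambda>s. F (picard_iter F x0 k s) i)"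
    by (rule field_continuous_on[OF Suc.IH Suc.prems])
  hence "continuous_on {0..T} (\<lambda>t. integral {0..t} (\<lambda>s. F (picard_iter F x0 k s) i))"
    by (intro indefinite_integral_continuous_1 integrable_continuous_real)
  thus ?case
    by (simp add: continuous_on_add)
qed simp

lemma picard_integrable: "i < N \<Longrightarrow> (\<lambda>s. F (picard_iter F x0 k s) i) integrable_on {0..t}"
  by (intro integrable_continuous_real field_continuous_on picard_continuous_on)

lemma picard_has_derivative:
  assumes "i < N" "t \<in> {0..T}"
  shows "((\<lambda>t. picard_iter F x0 (Suc k) t i) has_real_derivative F (picard_iter F x0 k t) i)
    (at t within {0..T})"
  using integral_has_real_derivative[OF field_continuous_on[OF picard_continuous_on] assms(2)] assms(1)
  by (auto intro!: derivative_eq_intros)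

lemma picard_lipschitz_time:
  assumes "i < N" "0 \<le> t" "0 \<le> t'"
  shows "\<bar>picard_iter F x0 (Suc k) t i - picard_iter F x0 (Suc k) t' i\<bar> \<le> B * \<bar>t - t'\<bar>"
proof -
  have "norm (picard_iter F x0 (Suc k) t i - picard_iter F x0 (Suc k) t' i) \<le> B * norm (t - t')"
  proof (rule field_differentiable_bound[where S="{0..max t t'}"])
    fix z :: real assume "z \<in> {0..max t t'}"
    thus "((\<lambda>t. picard_iter F x0 (Suc k) t i) has_field_derivative F (picard_iter F x0 k z) i)
        (at z within {0..max t t'})"
      by (rule picard_has_derivative[OF assms(1)])
    show "norm (F (picard_iter F x0 k z) i) \<le> B"
      using field_bounded[OF assms(1)] by simp
  qed (use assms in auto)
  thus ?thesis by simp
qed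

lemma picard_step_le_integral:
  "(\<Sum>i<N. \<bar>picard_iter F x0 (Suc (Suc k)) t i - picard_iter F x0 (Suc k) t i\<bar>)
    \<le> L * integral {0..t} (\<lambda>s. \<Sum>j<N. \<bar>picard_iter F x0 (Suc k) s j - picard_iter F x0 k s j\<bar>)"
proof -
  let ?P = "picard_iter F x0"
  let ?d = "\<lambda>i s. \<bar>F (?P (Suc k) s) i - F (?P k s) i\<bar>"
  have d_integrable: "?d i integrable_on {0..t}" if "i < N" for i
  proof -
    have "continuous_on {0..t} (\<lambda>s. F (?P l s) i)" for l
      by (rule field_continuous_on[OF picard_continuous_on that])
    thus ?thesis
      by (intro integrable_continuous_real continuous_on_rabs continuous_on_diff)
  qed
  have "\<bar>?P (Suc (Suc k)) t i - ?P (Suc k) t i\<bar> \<le> integral {0..t} (?d i)" if "i < N" for i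
  proof -
    have "?P (Suc (Suc k)) t i - ?P (Suc k) t i
        = integral {0..t} (\<lambda>s. F (?P (Suc k) s) i - F (?P k s) i)"
      by (subst integral_diff[OF picard_integrable[OF that] picard_integrable[OF that]]) simp
    moreover have "norm (integral {0..t} (\<lambda>s. F (?P (Suc k) s) i - F (?P k s) i))
        \<le> integral {0..t} (?d i)"
      by (intro integral_norm_bound_integral integrable_diff picard_integrable d_integrable that) simp
    ultimately show ?thesis by simp
  qed
  hence "(\<Sum>i<N. \<bar>?P (Suc (Suc k)) t i - ?P (Suc k) t i\<bar>) \<le> (\<Sum>i<N. integral {0..t} (?d i))"
    by (intro sum_mono) auto
  also have "\<dots> = integral {0..t} (\<lambda>s. \<Sum>i<N. ?d i s)"
    using d_integrable by (intro integral_sum[symmetric]) auto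
  also have "\<dots> \<le> integral {0..t} (\<lambda>s. L * (\<Sum>j<N. \<bar>?P (Suc k) s j - ?P k s j\<bar>))"
  proof (rule integral_le)
    show "(\<lambda>s. \<Sum>i<N. ?d i s) integrable_on {0..t}"
      using d_integrable by (intro integrable_sum) auto
    show "(\<lambda>s. L * (\<Sum>j<N. \<bar>?P (Suc k) s j - ?P k s j\<bar>)) integrable_on {0..t}"
      by (intro integrable_continuous_real continuous_intros picard_continuous_on) auto
  qed (rule field_lipschitz)
  finally show ?thesis
    by simp
qed

lemma picard_step_bound:
  assumes "0 \<le> t"
  shows "(\<Sum>i<N. \<bar>picard_iter F x0 (Suc k) t i - picard_iter F x0 k t i\<bar>)
    \<le> real N * B * (1/2) ^ k * exp (2 * (L + 1) * t)"
  using assms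
proof (induction k arbitrary: t)
  case 0
  have "(\<Sum>i<N. \<bar>picard_iter F x0 1 t i - picard_iter F x0 0 t i\<bar>) = (\<Sum>i<N. t * \<bar>F x0 i\<bar>)"
    using 0 by (simp add: abs_mult)
  also have "\<dots> \<le> (\<Sum>i<N. t * B)"
    using 0 field_bounded by (intro sum_mono mult_left_mono) auto
  also have "\<dots> = real N * B * t" by simp
  also have "\<dots> \<le> real N * B * exp (2 * (L + 1) * t)"
  proof (intro mult_left_mono N_bound_nonneg)
    have "t \<le> 1 + 2 * (L + 1) * t" using 0 lipschitz_nonneg by (simp add: algebra_simps)
    thus "t \<le> exp (2 * (L + 1) * t)" using exp_ge_add_one_self order_trans by blast
  qed
  finally show ?case by simp
next
  case (Suc k)
  let ?c = "real N * B * (1/2) ^ k"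
  have "(\<Sum>i<N. \<bar>picard_iter F x0 (Suc (Suc k)) t i - picard_iter F x0 (Suc k) t i\<bar>)
      \<le> L * integral {0..t} (\<lambda>s. \<Sum>j<N. \<bar>picard_iter F x0 (Suc k) s j - picard_iter F x0 k s j\<bar>)"
    by (rule picard_step_le_integral)
  also have "\<dots> \<le> L * integral {0..t} (\<lambda>s. ?c * exp (2 * (L + 1) * s))"
  proof (intro mult_left_mono integral_le lipschitz_nonneg)
    show "(\<lambda>s. \<Sum>j<N. \<bar>picard_iter F x0 (Suc k) s j - picard_iter F x0 k s j\<bar>) integrable_on {0..t}"
      by (intro integrable_continuous_real continuous_intros picard_continuous_on) auto
    show "(\<lambda>s. ?c * exp (2 * (L + 1) * s)) integrable_on {0..t}"
      by (intro integrable_continuous_real continuous_intros)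
  qed (use Suc.IH in simp)
  also have "\<dots> = ?c * (L * ((exp (2 * (L + 1) * t) - 1) / (2 * (L + 1))))"
    using integral_exp_scaled[of "2 * (L + 1)" t] Suc.prems lipschitz_nonneg by simp
  \<comment> \<open>the weight \<open>exp (2 * (L + 1) * t)\<close> makes each Picard step contract by \<open>1/2\<close>\<close>
  also have "\<dots> \<le> ?c * (exp (2 * (L + 1) * t) / 2)"
  proof (rule mult_left_mono)
    have "0 < exp (2 * (L + 1) * t)" by simp
    thus "L * ((exp (2 * (L + 1) * t) - 1) / (2 * (L + 1))) \<le> exp (2 * (L + 1) * t) / 2"
      using lipschitz_nonneg by (simp add: field_simps)
  qed (use N_bound_nonneg in simp)
  also have "\<dots> = real N * B * (1/2) ^ Suc k * exp (2 * (L + 1) * t)"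
    by simp
  finally show ?case .
qed

text \<open>Only the values for \<open>0 \<le> t\<close> and \<open>i < N\<close> are meaningful.\<close>

definition flow :: "(nat \<Rightarrow> real) \<Rightarrow> real \<Rightarrow> nat \<Rightarrow> real" where
  "flow x0 t i = lim (\<lambda>k. picard_iter F x0 k t i)"

lemma picard_tendsto_flow:
  assumes "0 \<le> t" "i < N"
  shows "(\<lambda>k. picard_iter F x0 k t i) \<longlonglongrightarrow> flow x0 t i"
proof -
  define d where "d k = picard_iter F x0 (Suc k) t i - picard_iter F x0 k t i" for k
  have bound: "norm (d k) \<le> real N * B * exp (2 * (L + 1) * t) * (1/2) ^ k" for k
  proof -
    have "\<bar>d k\<bar> \<le> (\<Sum>j<N. \<bar>picard_iter F x0 (Suc k) t j - picard_iter F x0 k t j\<bar>)"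
      unfolding d_def
      by (rule member_le_sum[where f="\<lambda>j. \<bar>picard_iter F x0 (Suc k) t j - picard_iter F x0 k t j\<bar>"])
        (use assms in auto)
    also have "\<dots> \<le> real N * B * (1/2) ^ k * exp (2 * (L + 1) * t)"
      by (rule picard_step_bound[OF assms(1)])
    finally show ?thesis by (simp add: mult_ac)
  qed
  have "summable (\<lambda>k. real N * B * exp (2 * (L + 1) * t) * (1/2::real) ^ k)"
    by (intro summable_mult summable_geometric) simp
  hence "summable d"
    by (rule summable_comparison_test') (rule bound)
  moreover have "(\<Sum>k<n. d k) = picard_iter F x0 n t i - x0 i" for n
    unfolding d_def by (subst sum_lessThan_telescope) simp
  ultimately have "(\<lambda>n. picard_iter F x0 n t i - x0 i) \<longlonglongrightarrow> suminf d"
    using summable_LIMSEQ[of d] by simp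
  from tendsto_add[OF this tendsto_const[of "x0 i"]]
  have "convergent (\<lambda>n. picard_iter F x0 n t i)"
    by (auto intro: convergentI)
  thus ?thesis by (simp add: flow_def convergent_LIMSEQ_iff)
qed

lemma flow_lipschitz_time:
  assumes "i < N" "0 \<le> t" "0 \<le> t'"
  shows "\<bar>flow x0 t i - flow x0 t' i\<bar> \<le> B * \<bar>t - t'\<bar>"
proof -
  have "(\<lambda>k. \<bar>picard_iter F x0 (Suc k) t i - picard_iter F x0 (Suc k) t' i\<bar>)
      \<longlonglongrightarrow> \<bar>flow x0 t i - flow x0 t' i\<bar>"
    by (intro tendsto_intros LIMSEQ_Suc picard_tendsto_flow assms)
  thus ?thesis
    by (rule LIMSEQ_le_const2) (use picard_lipschitz_time[OF assms] in auto)
qed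

lemma flow_continuous_on: "i < N \<Longrightarrow> continuous_on {0..} (\<lambda>t. flow x0 t i)"
  by (rule lipschitz_on_continuous_on[of B], rule lipschitz_onI)
    (auto simp: dist_real_def intro: flow_lipschitz_time order_trans[OF abs_ge_zero field_bounded])

lemma flow_integral_eq:
  assumes "0 \<le> t" "i < N"
  shows "flow x0 t i = x0 i + integral {0..t} (\<lambda>s. F (flow x0 s) i)"
proof -
  have "(\<lambda>k. integral {0..t} (\<lambda>s. F (picard_iter F x0 k s) i))
      \<longlonglongrightarrow> integral {0..t} (\<lambda>s. F (flow x0 s) i)"
  proof (rule dominated_convergence(2))
    show "(\<lambda>s. F (picard_iter F x0 k s) i) integrable_on {0..t}" for k
      by (rule picard_integrable[OF assms(2)])
    show "(\<lambda>s. B) integrable_on {0..t}"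
      by (rule integrable_const_ivl)
    show "norm (F (picard_iter F x0 k s) i) \<le> B" if "s \<in> {0..t}" for k s
      using field_bounded[OF assms(2)] by simp
    show "(\<lambda>k. F (picard_iter F x0 k s) i) \<longlonglongrightarrow> F (flow x0 s) i" if "s \<in> {0..t}" for s
      using that by (intro field_tendsto picard_tendsto_flow assms(2)) auto
  qed
  hence "(\<lambda>k. picard_iter F x0 (Suc k) t i) \<longlonglongrightarrow> x0 i + integral {0..t} (\<lambda>s. F (flow x0 s) i)"
    by (simp add: tendsto_add_const_iff)
  moreover have "(\<lambda>k. picard_iter F x0 (Suc k) t i) \<longlonglongrightarrow> flow x0 t i"
    by (intro LIMSEQ_Suc picard_tendsto_flow assms)
  ultimately show ?thesis
    using LIMSEQ_unique by blast
qed

lemma flow_has_derivative: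
  assumes "0 \<le> t" "i < N"
  shows "((\<lambda>t. flow x0 t i) has_real_derivative F (flow x0 t) i) (at t within {0..})"
proof -
  let ?g = "\<lambda>s. F (flow x0 s) i"
  have "continuous_on {0..t + 1} ?g"
    by (intro field_continuous_on continuous_on_subset[OF flow_continuous_on] assms(2)) auto
  hence "((\<lambda>s. x0 i + integral {0..s} ?g) has_real_derivative ?g t) (at t within {0..t + 1})"
    using assms(1) by (auto intro!: derivative_eq_intros integral_has_real_derivative)
  hence "((\<lambda>s. flow x0 s i) has_real_derivative ?g t) (at t within {0..t + 1})"
    by (rule has_field_derivative_transform_within[where d=1])
      (use assms flow_integral_eq[OF _ assms(2)] in auto)
  moreover have "at t within {0..} = at t within {0..t + 1}"
    by (rule at_within_nhd[of t "{..<t + 1}"]) auto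
  ultimately show ?thesis by simp
qed

lemma flow_solves: "ode_solution F N x0 (flow x0)"
  unfolding ode_solution_def
  using flow_integral_eq[of 0] flow_has_derivative by simp

lemma field_one_sided_lipschitz:
  "(\<Sum>i<N. (\<theta> i - \<eta> i) * (F \<theta> i - F \<eta> i)) \<le> (1 + L\<^sup>2 * real N) / 2 * (\<Sum>i<N. (\<theta> i - \<eta> i)\<^sup>2)"
proof -
  define d where "d i = \<theta> i - \<eta> i" for i
  define e where "e i = F \<theta> i - F \<eta> i" for i
  have "(\<Sum>i<N. \<bar>e i\<bar>) \<le> L * (\<Sum>j<N. \<bar>d j\<bar>)"
    unfolding d_def e_def by (rule field_lipschitz)
  hence "(\<Sum>i<N. \<bar>e i\<bar>)\<^sup>2 \<le> (L * (\<Sum>j<N. \<bar>d j\<bar>))\<^sup>2"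
    by (intro power_mono) (auto intro: sum_nonneg)
  also have "\<dots> = L\<^sup>2 * (\<Sum>j<N. \<bar>d j\<bar>)\<^sup>2"
    by (simp add: power_mult_distrib)
  also have "\<dots> \<le> L\<^sup>2 * (real N * (\<Sum>j<N. (d j)\<^sup>2))"
    using sum_squared_le_sum_of_squares[of "\<lambda>j. \<bar>d j\<bar>" "{..<N}"]
    by (intro mult_left_mono) (simp_all add: mult.commute)
  finally have e_sq: "(\<Sum>i<N. (e i)\<^sup>2) \<le> L\<^sup>2 * real N * (\<Sum>j<N. (d j)\<^sup>2)"
    using sum_squares_le_square_sum_abs[of "{..<N}" e] by (simp add: mult.assoc)
  have "(\<Sum>i<N. d i * e i) \<le> (\<Sum>i<N. ((d i)\<^sup>2 + (e i)\<^sup>2) / 2)"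
    using sum_squares_bound by (intro sum_mono) (simp add: field_simps)
  also have "\<dots> = ((\<Sum>i<N. (d i)\<^sup>2) + (\<Sum>i<N. (e i)\<^sup>2)) / 2"
    by (simp add: sum.distrib flip: sum_divide_distrib)
  also have "\<dots> \<le> (1 + L\<^sup>2 * real N) / 2 * (\<Sum>i<N. (d i)\<^sup>2)"
    using e_sq by (simp add: field_simps)
  finally show ?thesis by (simp add: d_def e_def)
qed

lemma ode_solution_sq_dist_le:
  assumes sol_x: "ode_solution F N x \<theta>" and sol_y: "ode_solution F N y \<eta>" and "0 \<le> t"
  shows "(\<Sum>i<N. (\<theta> t i - \<eta> t i)\<^sup>2) \<le> exp ((1 + L\<^sup>2 * real N) * t) * (\<Sum>i<N. (x i - y i)\<^sup>2)"
proof -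
  let ?g = "\<lambda>s. \<Sum>i<N. (\<theta> s i - \<eta> s i)\<^sup>2"
  let ?g' = "\<lambda>s. \<Sum>i<N. 2 * ((\<theta> s i - \<eta> s i) * (F (\<theta> s) i - F (\<eta> s) i))"
  have "?g t \<le> exp ((1 + L\<^sup>2 * real N) * t) * ?g 0"
  proof (rule gronwall_has_derivative[OF _ _ \<open>0 \<le> t\<close>])
    fix s :: real assume "0 \<le> s"
    show "(?g has_real_derivative ?g' s) (at s within {0..})"
      using sol_x sol_y \<open>0 \<le> s\<close> unfolding ode_solution_def
      by (auto intro!: derivative_eq_intros simp: mult_ac)
    show "?g' s \<le> (1 + L\<^sup>2 * real N) * ?g s"
      using field_one_sided_lipschitz[of "\<theta> s" "\<eta> s"] by (simp add: sum_distrib_left[symmetric])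
  qed
  moreover have "?g 0 = (\<Sum>i<N. (x i - y i)\<^sup>2)"
    using sol_x sol_y by (simp add: ode_solution_def)
  ultimately show ?thesis by simp
qed

lemma ode_solution_unique:
  assumes "ode_solution F N x \<theta>" "ode_solution F N x \<eta>" "0 \<le> t" "i < N"
  shows "\<theta> t i = \<eta> t i"
proof -
  have "(\<Sum>j<N. (\<theta> t j - \<eta> t j)\<^sup>2) \<le> 0"
    using ode_solution_sq_dist_le[OF assms(1-3)] by simp
  hence "(\<Sum>j<N. (\<theta> t j - \<eta> t j)\<^sup>2) = 0"
    by (intro antisym sum_nonneg) auto
  thus ?thesis
    using assms(4) by (subst (asm) sum_nonneg_eq_0_iff) auto
qed

lemma forall_solutions_iff_flow:
  assumes "\<And>\<theta> \<eta>. (\<And>t i. 0 \<le> t \<Longrightarrow> i < N \<Longrightarrow> \<theta> t i = \<eta> t i) \<Longrightarrow> P \<theta> \<longleftrightarrow> P \<eta>"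
  shows "(\<forall>\<theta>. ode_solution F N x0 \<theta> \<longrightarrow> P \<theta>) \<longleftrightarrow> P (flow x0)"
proof
  assume "\<forall>\<theta>. ode_solution F N x0 \<theta> \<longrightarrow> P \<theta>"
  thus "P (flow x0)"
    using flow_solves by blast
next
  assume "P (flow x0)"
  moreover have "P \<theta> \<longleftrightarrow> P (flow x0)" if "ode_solution F N x0 \<theta>" for \<theta>
    by (rule assms) (rule ode_solution_unique[OF that flow_solves])
  ultimately show "\<forall>\<theta>. ode_solution F N x0 \<theta> \<longrightarrow> P \<theta>"
    by blast
qed

lemma flow_continuous_initial:
  assumes "0 \<le> t" "i < N"
  shows "continuous_on UNIV (\<lambda>x0. flow x0 t i)"
proof (rule continuous_at_imp_continuous_on, intro ballI)
  fix z :: "nat \<Rightarrow> real"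
  let ?c = "exp ((1 + L\<^sup>2 * real N) * t)"
  have "((\<lambda>w. sqrt (?c * (\<Sum>j<N. (w j - z j)\<^sup>2))) \<longlongrightarrow> sqrt (?c * (\<Sum>j<N. (z j - z j)\<^sup>2))) (at z)"
    by (intro tendsto_intros) (auto intro: continuous_on_product_coordinates[THEN continuous_on_interior,
        unfolded isCont_def])
  hence lim: "((\<lambda>w. sqrt (?c * (\<Sum>j<N. (w j - z j)\<^sup>2))) \<longlongrightarrow> 0) (at z)"
    by simp
  have "\<forall>w. norm (flow w t i - flow z t i) \<le> sqrt (?c * (\<Sum>j<N. (w j - z j)\<^sup>2))"
  proof
    fix w :: "nat \<Rightarrow> real"
    have "(flow w t i - flow z t i)\<^sup>2 \<le> (\<Sum>j<N. (flow w t j - flow z t j)\<^sup>2)"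
      by (rule member_le_sum[where f="\<lambda>j. (flow w t j - flow z t j)\<^sup>2"]) (use assms in auto)
    also have "\<dots> \<le> ?c * (\<Sum>j<N. (w j - z j)\<^sup>2)"
      by (rule ode_solution_sq_dist_le[OF flow_solves flow_solves assms(1)])
    finally show "norm (flow w t i - flow z t i) \<le> sqrt (?c * (\<Sum>j<N. (w j - z j)\<^sup>2))"
      using real_sqrt_le_mono by fastforce
  qed
  from Lim_null_comparison[OF always_eventually[OF this] lim]
  show "isCont (\<lambda>w. flow w t i) z"
    unfolding isCont_def by (rule LIM_zero_cancel)
qed

lemma flow_measurable:
  assumes "\<And>j. (\<lambda>x. x j) \<in> borel_measurable M" "0 \<le> t" "i < N"
  shows "(\<lambda>x. flow x t i) \<in> borel_measurable M"
proof -
  have "(\<lambda>x. x) \<in> measurable M (PiM UNIV (\<lambda>_. borel :: real measure))"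
    by (rule measurable_PiM_single') (use assms(1) in auto)
  moreover have "(\<lambda>x0. flow x0 t i) \<in> borel_measurable (PiM UNIV (\<lambda>_. borel :: real measure))"
    by (subst measurable_cong_sets[OF sets_PiM_equal_borel refl])
      (rule borel_measurable_continuous_onI[OF flow_continuous_initial[OF assms(2,3)]])
  ultimately show ?thesis
    by (rule measurable_compose)
qed

end

section \<open>Testing conditions at rational times\<close>

lemma rat_seq_tendsto_from_below:
  fixes t :: real
  assumes "0 \<le> t"
  obtains r :: "nat \<Rightarrow> rat" where "\<And>k. real_of_rat (r k) \<in> {0..t}" "(\<lambda>k. real_of_rat (r k)) \<longlonglongrightarrow> t"
proof
  define r :: "nat \<Rightarrow> rat" where "r k = of_int \<lfloor>t * real (Suc k)\<rfloor> / of_nat (Suc k)" for k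
  have r_eq: "real_of_rat (r k) = of_int \<lfloor>t * real (Suc k)\<rfloor> / real (Suc k)" for k
    by (simp only: r_def of_rat_divide of_rat_of_int_eq of_rat_of_nat_eq)
  have upper: "real_of_rat (r k) \<le> t" for k
    unfolding r_eq by (simp add: pos_divide_le_eq del: of_nat_Suc)
  have lower: "t - 1 / real (Suc k) \<le> real_of_rat (r k)" for k
  proof -
    have "t * real (Suc k) - 1 \<le> of_int \<lfloor>t * real (Suc k)\<rfloor>"
      by linarith
    hence "(t * real (Suc k) - 1) / real (Suc k) \<le> of_int \<lfloor>t * real (Suc k)\<rfloor> / real (Suc k)"
      by (rule divide_right_mono) simp
    thus ?thesis
      by (simp add: r_eq diff_divide_distrib del: of_nat_Suc)
  qed
  show "real_of_rat (r k) \<in> {0..t}" for k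
    using upper \<open>0 \<le> t\<close> by (simp add: r_eq)
  have "(\<lambda>k. t - 1 / real (Suc k)) \<longlonglongrightarrow> t - 0"
    by (intro tendsto_intros LIMSEQ_Suc lim_1_over_n)
  moreover have "\<forall>k. t - 1 / real (Suc k) \<le> real_of_rat (r k)" "\<forall>k. real_of_rat (r k) \<le> t"
    using lower upper by blast+
  ultimately show "(\<lambda>k. real_of_rat (r k)) \<longlonglongrightarrow> t"
    using tendsto_sandwich[OF always_eventually always_eventually _ tendsto_const] by simp
qed

lemma continuous_on_mem_closed_from_rats:
  fixes g :: "real \<Rightarrow> 'a::topological_space"
  assumes cont: "continuous_on {0..T} g" and t: "t \<in> {0..T}" and "closed C"
    and rats: "\<And>q. real_of_rat q \<in> {0..T} \<Longrightarrow> g (real_of_rat q) \<in> C"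
  shows "g t \<in> C"
proof -
  obtain r where r: "\<And>k. real_of_rat (r k) \<in> {0..t}" "(\<lambda>k. real_of_rat (r k)) \<longlonglongrightarrow> t"
    using rat_seq_tendsto_from_below[of t] t by auto
  have r_in: "real_of_rat (r k) \<in> {0..T}" for k
    using r(1)[of k] t by auto
  have "(\<lambda>k. g (real_of_rat (r k))) \<longlonglongrightarrow> g t"
    by (rule continuous_on_tendsto_compose[OF cont r(2) t always_eventually]) (use r_in in blast)
  moreover have "\<forall>k. g (real_of_rat (r k)) \<in> C"
    using rats r_in by blast
  ultimately show ?thesis
    by (intro Lim_in_closed_set[OF \<open>closed C\<close> always_eventually]) auto
qed

lemma continuous_forall_gt_iff_rat:
  fixes g :: "real \<Rightarrow> real"
  assumes cont: "continuous_on {0..} g"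
  shows "(\<forall>t\<ge>0. c < g t) \<longleftrightarrow>
    (\<forall>n::nat. \<exists>m::nat. \<forall>q::rat. real_of_rat q \<in> {0..real n} \<longrightarrow> c + 1 / real (Suc m) \<le> g (real_of_rat q))"
proof
  assume pos: "\<forall>t\<ge>0. c < g t"
  show "\<forall>n::nat. \<exists>m::nat. \<forall>q::rat. real_of_rat q \<in> {0..real n} \<longrightarrow> c + 1 / real (Suc m) \<le> g (real_of_rat q)"
  proof
    fix n :: nat
    \<comment> \<open>on the compact interval \<open>[0, n]\<close> the minimum of \<open>g\<close> is attained, hence above \<open>c\<close> by a margin\<close>
    have "\<exists>x\<in>{0..real n}. \<forall>y\<in>{0..real n}. g x \<le> g y"
      by (rule continuous_attains_inf) (auto intro: continuous_on_subset[OF cont])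
    then obtain x where x: "x \<in> {0..real n}" "\<forall>y\<in>{0..real n}. g x \<le> g y"
      by blast
    have "0 < g x - c"
      using pos x(1) by simp
    then obtain m where "inverse (real (Suc m)) < g x - c"
      using reals_Archimedean by blast
    hence m: "1 / real (Suc m) < g x - c"
      by (simp only: inverse_eq_divide)
    have "c + 1 / real (Suc m) \<le> g (real_of_rat q)" if "real_of_rat q \<in> {0..real n}" for q
      using m x(2) that by fastforce
    thus "\<exists>m::nat. \<forall>q::rat. real_of_rat q \<in> {0..real n} \<longrightarrow> c + 1 / real (Suc m) \<le> g (real_of_rat q)"
      by blast
  qed
next
  assume margin: "\<forall>n::nat. \<exists>m::nat. \<forall>q::rat. real_of_rat q \<in> {0..real n} \<longrightarrow> c + 1 / real (Suc m) \<le> g (real_of_rat q)"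
  show "\<forall>t\<ge>0. c < g t"
  proof (intro allI impI)
    fix t :: real assume "0 \<le> t"
    obtain n :: nat where "t \<le> real n"
      using real_arch_simple by blast
    obtain m where m: "\<And>q. real_of_rat q \<in> {0..real n} \<Longrightarrow> c + 1 / real (Suc m) \<le> g (real_of_rat q)"
      using margin by blast
    have "g t \<in> {c + 1 / real (Suc m)..}"
      by (rule continuous_on_mem_closed_from_rats[OF continuous_on_subset[OF cont]])
        (use \<open>0 \<le> t\<close> \<open>t \<le> real n\<close> m in auto)
    moreover have "0 < 1 / real (Suc m)"
      by simp
    ultimately show "c < g t"
      unfolding atLeast_iff by linarith
  qed
qed

lemma continuous_oscillation_lt_iff_rat:
  fixes f :: "real \<Rightarrow> real"
  assumes cont: "continuous_on {0..} f"
  shows "(bdd_above (f ` {0..}) \<and> bdd_below (f ` {0..}) \<and> (SUP t\<in>{0..}. f t) - (INF t\<in>{0..}. f t) < w)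
    \<longleftrightarrow> (\<exists>a b :: rat. real_of_rat b - real_of_rat a < w \<and>
      (\<forall>q::rat. 0 \<le> real_of_rat q \<longrightarrow> real_of_rat a \<le> f (real_of_rat q) \<and> f (real_of_rat q) \<le> real_of_rat b))"
proof
  assume osc: "bdd_above (f ` {0..}) \<and> bdd_below (f ` {0..}) \<and> (SUP t\<in>{0..}. f t) - (INF t\<in>{0..}. f t) < w"
  define hi where "hi = (SUP t\<in>{0..}. f t)"
  define lo where "lo = (INF t\<in>{0..}. f t)"
  define gap where "gap = w - (hi - lo)"
  have "0 < gap"
    using osc by (simp add: gap_def hi_def lo_def)
  then obtain a b :: rat where a: "lo - gap / 2 < real_of_rat a" "real_of_rat a < lo"
    and b: "hi < real_of_rat b" "real_of_rat b < hi + gap / 2"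
    using Rats_dense_in_real[of "lo - gap / 2" lo] Rats_dense_in_real[of hi "hi + gap / 2"]
    by (auto elim!: Rats_cases)
  have "lo \<le> f t" "f t \<le> hi" if "0 \<le> t" for t
    using osc that unfolding lo_def hi_def by (auto intro: cINF_lower cSUP_upper)
  hence "\<forall>q::rat. 0 \<le> real_of_rat q \<longrightarrow> real_of_rat a \<le> f (real_of_rat q) \<and> f (real_of_rat q) \<le> real_of_rat b"
    using a(2) b(1) by (meson order.trans less_imp_le)
  moreover have "real_of_rat b - real_of_rat a < (hi + gap / 2) - (lo - gap / 2)"
    using a b by linarith
  hence "real_of_rat b - real_of_rat a < w"
    by (simp add: gap_def)
  ultimately show "\<exists>a b :: rat. real_of_rat b - real_of_rat a < w \<and>
      (\<forall>q::rat. 0 \<le> real_of_rat q \<longrightarrow> real_of_rat a \<le> f (real_of_rat q) \<and> f (real_of_rat q) \<le> real_of_rat b)"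
    by blast
next
  assume "\<exists>a b :: rat. real_of_rat b - real_of_rat a < w \<and>
      (\<forall>q::rat. 0 \<le> real_of_rat q \<longrightarrow> real_of_rat a \<le> f (real_of_rat q) \<and> f (real_of_rat q) \<le> real_of_rat b)"
  then obtain a b :: rat where width: "real_of_rat b - real_of_rat a < w"
    and rats: "\<And>q. 0 \<le> real_of_rat q \<Longrightarrow> f (real_of_rat q) \<in> {real_of_rat a..real_of_rat b}"
    by auto
  have "f t \<in> {real_of_rat a..real_of_rat b}" if "0 \<le> t" for t
    by (rule continuous_on_mem_closed_from_rats[where T=t, OF continuous_on_subset[OF cont]])
      (use that rats in auto)
  hence bounds: "\<And>t. t \<in> {0..} \<Longrightarrow> real_of_rat a \<le> f t \<and> f t \<le> real_of_rat b"
    by simp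
  show "bdd_above (f ` {0..}) \<and> bdd_below (f ` {0..}) \<and> (SUP t\<in>{0..}. f t) - (INF t\<in>{0..}. f t) < w"
    using bounded_range_SUP_INF[of "{0..}" "real_of_rat a" f "real_of_rat b", OF _ bounds] width by auto
qed

section \<open>The Kuramoto vector field\<close>

definition kuramoto_field ::
  "(real \<Rightarrow> real) \<Rightarrow> (real \<Rightarrow> real) \<Rightarrow> nat \<Rightarrow> (nat \<Rightarrow> real) \<Rightarrow> real \<Rightarrow> (nat \<Rightarrow> real) \<Rightarrow> nat \<Rightarrow> real"
  where "kuramoto_field S I N \<omega> \<kappa> \<theta> i = \<omega> i + \<kappa> / real N * (\<Sum>j<N. I (\<theta> j)) * S (\<theta> i)"

lemma is_solution_iff_ode_solution:
  "is_solution S I N \<omega> \<kappa> x0 \<theta> \<longleftrightarrow> ode_solution (kuramoto_field S I N \<omega> \<kappa>) N x0 \<theta>"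
  by (simp add: is_solution_def ode_solution_def kuramoto_field_def)

lemma kuramoto_field_order_param:
  "kuramoto_field S I N \<omega> \<kappa> \<theta> i = \<omega> i + \<kappa> * order_param I N \<theta> * S (\<theta> i)"
  by (simp add: kuramoto_field_def order_param_def)

lemma kuramoto_field_component_lipschitz:
  assumes S_bound: "\<And>x. \<bar>S x\<bar> \<le> BS" and I_bound: "\<And>x. \<bar>I x\<bar> \<le> BI"
    and S_lip: "LS-lipschitz_on UNIV S" and I_lip: "LI-lipschitz_on UNIV I"
  shows "\<bar>kuramoto_field S I N \<omega> \<kappa> \<theta> i - kuramoto_field S I N \<omega> \<kappa> \<eta> i\<bar>
    \<le> \<bar>\<kappa>\<bar> / real N * (LI * BS * (\<Sum>j<N. \<bar>\<theta> j - \<eta> j\<bar>) + real N * BI * LS * \<bar>\<theta> i - \<eta> i\<bar>)"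
proof -
  have S_diff: "\<bar>S x - S y\<bar> \<le> LS * \<bar>x - y\<bar>" and I_diff: "\<bar>I x - I y\<bar> \<le> LI * \<bar>x - y\<bar>" for x y
    using lipschitz_onD[OF S_lip, of x y] lipschitz_onD[OF I_lip, of x y] by (simp_all add: dist_real_def)
  define A where "A = (\<Sum>j<N. I (\<theta> j))"
  define A' where "A' = (\<Sum>j<N. I (\<eta> j))"
  have "\<bar>A - A'\<bar> \<le> (\<Sum>j<N. \<bar>I (\<theta> j) - I (\<eta> j)\<bar>)"
    unfolding A_def A'_def by (simp add: sum_abs flip: sum_subtractf)
  also have "\<dots> \<le> LI * (\<Sum>j<N. \<bar>\<theta> j - \<eta> j\<bar>)"
    by (simp add: sum_distrib_left sum_mono I_diff)
  finally have A_diff: "\<bar>A - A'\<bar> \<le> LI * (\<Sum>j<N. \<bar>\<theta> j - \<eta> j\<bar>)" .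
  have "\<bar>A'\<bar> \<le> (\<Sum>j<N. \<bar>I (\<eta> j)\<bar>)"
    unfolding A'_def by (rule sum_abs)
  also have "\<dots> \<le> real N * BI"
    using sum_mono[of "{..<N}" "\<lambda>j. \<bar>I (\<eta> j)\<bar>" "\<lambda>_. BI"] I_bound by simp
  finally have A'_bound: "\<bar>A'\<bar> \<le> real N * BI" .
  have "A * S (\<theta> i) - A' * S (\<eta> i) = (A - A') * S (\<theta> i) + A' * (S (\<theta> i) - S (\<eta> i))"
    by (simp add: algebra_simps)
  hence "\<bar>A * S (\<theta> i) - A' * S (\<eta> i)\<bar> \<le> \<bar>A - A'\<bar> * \<bar>S (\<theta> i)\<bar> + \<bar>A'\<bar> * \<bar>S (\<theta> i) - S (\<eta> i)\<bar>"
    by (metis abs_mult abs_triangle_ineq)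
  also have "\<dots> \<le> LI * (\<Sum>j<N. \<bar>\<theta> j - \<eta> j\<bar>) * BS + real N * BI * (LS * \<bar>\<theta> i - \<eta> i\<bar>)"
    using A_diff A'_bound S_bound[of "\<theta> i"] S_diff[of "\<theta> i" "\<eta> i"]
      lipschitz_on_nonneg[OF I_lip] order_trans[OF abs_ge_zero I_bound]
    by (intro add_mono mult_mono) (auto intro: sum_nonneg)
  finally have "\<bar>A * S (\<theta> i) - A' * S (\<eta> i)\<bar>
      \<le> LI * BS * (\<Sum>j<N. \<bar>\<theta> j - \<eta> j\<bar>) + real N * BI * LS * \<bar>\<theta> i - \<eta> i\<bar>"
    by (simp add: algebra_simps)
  hence "\<bar>\<kappa>\<bar> / real N * \<bar>A * S (\<theta> i) - A' * S (\<eta> i)\<bar>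
      \<le> \<bar>\<kappa>\<bar> / real N * (LI * BS * (\<Sum>j<N. \<bar>\<theta> j - \<eta> j\<bar>) + real N * BI * LS * \<bar>\<theta> i - \<eta> i\<bar>)"
    by (rule mult_left_mono) simp
  moreover have "kuramoto_field S I N \<omega> \<kappa> \<theta> i - kuramoto_field S I N \<omega> \<kappa> \<eta> i
      = \<kappa> / real N * (A * S (\<theta> i) - A' * S (\<eta> i))"
    by (simp add: kuramoto_field_def A_def A'_def algebra_simps)
  ultimately show ?thesis
    by (simp only: abs_mult abs_divide abs_of_nat)
qed

lemma kuramoto_field_bounded:
  assumes S_bound: "\<And>x. \<bar>S x\<bar> \<le> BS" and I_bound: "\<And>x. \<bar>I x\<bar> \<le> BI" and "i < N"
  shows "\<bar>kuramoto_field S I N \<omega> \<kappa> \<theta> i\<bar> \<le> (\<Sum>j<N. \<bar>\<omega> j\<bar>) + \<bar>\<kappa>\<bar> * BI * BS"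
proof -
  have "0 \<le> BI"
    using order_trans[OF abs_ge_zero I_bound] by auto
  have "\<bar>\<Sum>j<N. I (\<theta> j)\<bar> \<le> real N * BI"
    using order_trans[OF sum_abs sum_mono[of "{..<N}" "\<lambda>j. \<bar>I (\<theta> j)\<bar>" "\<lambda>_. BI"]] I_bound by simp
  hence "\<bar>\<kappa> / real N * (\<Sum>j<N. I (\<theta> j)) * S (\<theta> i)\<bar> \<le> \<bar>\<kappa>\<bar> / real N * (real N * BI) * BS"
    unfolding abs_mult using \<open>0 \<le> BI\<close> S_bound[of "\<theta> i"]
    by (intro mult_mono mult_left_mono) simp_all
  also have "\<dots> = \<bar>\<kappa>\<bar> * BI * BS"
    using \<open>i < N\<close> by simp
  finally have "\<bar>\<kappa> / real N * (\<Sum>j<N. I (\<theta> j)) * S (\<theta> i)\<bar> \<le> \<bar>\<kappa>\<bar> * BI * BS" .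
  moreover have "\<bar>\<omega> i\<bar> \<le> (\<Sum>j<N. \<bar>\<omega> j\<bar>)"
    by (rule member_le_sum) (use \<open>i < N\<close> in auto)
  ultimately show ?thesis
    unfolding kuramoto_field_def by linarith
qed

lemma kuramoto_field_lipschitz:
  assumes "\<And>x. \<bar>S x\<bar> \<le> BS" "\<And>x. \<bar>I x\<bar> \<le> BI" "LS-lipschitz_on UNIV S" "LI-lipschitz_on UNIV I"
  shows "(\<Sum>i<N. \<bar>kuramoto_field S I N \<omega> \<kappa> \<theta> i - kuramoto_field S I N \<omega> \<kappa> \<eta> i\<bar>)
    \<le> \<bar>\<kappa>\<bar> * (LI * BS + BI * LS) * (\<Sum>j<N. \<bar>\<theta> j - \<eta> j\<bar>)"
proof -
  let ?D = "\<Sum>j<N. \<bar>\<theta> j - \<eta> j\<bar>"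
  have "(\<Sum>i<N. \<bar>kuramoto_field S I N \<omega> \<kappa> \<theta> i - kuramoto_field S I N \<omega> \<kappa> \<eta> i\<bar>)
      \<le> (\<Sum>i<N. \<bar>\<kappa>\<bar> / real N * (LI * BS * ?D + real N * BI * LS * \<bar>\<theta> i - \<eta> i\<bar>))"
    by (intro sum_mono kuramoto_field_component_lipschitz assms)
  also have "\<dots> = (\<Sum>i<N. \<bar>\<kappa>\<bar> / real N * (LI * BS * ?D) + \<bar>\<kappa>\<bar> * BI * LS * \<bar>\<theta> i - \<eta> i\<bar>)"
    by (rule sum.cong) (simp_all add: algebra_simps)
  also have "\<dots> = \<bar>\<kappa>\<bar> * (LI * BS + BI * LS) * ?D"
    by (simp add: sum.distrib algebra_simps flip: sum_distrib_left)
  finally show ?thesis .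
qed

lemma kuramoto_bounded_lipschitz_field:
  assumes "\<And>x. \<bar>S x\<bar> \<le> BS" "\<And>x. \<bar>I x\<bar> \<le> BI" "LS-lipschitz_on UNIV S" "LI-lipschitz_on UNIV I"
  shows "bounded_lipschitz_field N (kuramoto_field S I N \<omega> \<kappa>)
    ((\<Sum>j<N. \<bar>\<omega> j\<bar>) + \<bar>\<kappa>\<bar> * BI * BS) (\<bar>\<kappa>\<bar> * (LI * BS + BI * LS))"
proof
  have "0 \<le> BS" "0 \<le> BI"
    using order_trans[OF abs_ge_zero assms(1)] order_trans[OF abs_ge_zero assms(2)] by auto
  thus "0 \<le> \<bar>\<kappa>\<bar> * (LI * BS + BI * LS)"
    using lipschitz_on_nonneg[OF assms(3)] lipschitz_on_nonneg[OF assms(4)] by simp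
qed (use kuramoto_field_bounded[OF assms(1,2)] kuramoto_field_lipschitz[OF assms] in auto)

lemma periodic_lipschitz_kuramoto_field:
  assumes "\<forall>x. S (x + 2 * pi) = S x" "\<forall>x. I (x + 2 * pi) = I x"
    and "LS-lipschitz_on UNIV S" "LI-lipschitz_on UNIV I"
  obtains B L where "bounded_lipschitz_field N (kuramoto_field S I N \<omega> \<kappa>) B L"
proof -
  have "bounded (range S)" "bounded (range I)"
    using assms by (auto intro: periodic_continuous_bounded lipschitz_on_continuous_on)
  then obtain BS BI where "\<And>x. \<bar>S x\<bar> \<le> BS" "\<And>x. \<bar>I x\<bar> \<le> BI"
    by (auto simp: bounded_real)
  from kuramoto_bounded_lipschitz_field[OF this assms(3,4)] that show ?thesis
    by blast
qed

definition stays_coherent :: "(real \<Rightarrow> real) \<Rightarrow> nat \<Rightarrow> real \<Rightarrow> (real \<Rightarrow> nat \<Rightarrow> real) \<Rightarrow> bool" where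
  "stays_coherent I N c \<theta> \<longleftrightarrow> (\<forall>t\<ge>0. c < order_param I N (\<theta> t)) \<and>
     (\<forall>i<N. bdd_above ((\<lambda>t. \<theta> t i) ` {0..}) \<and> bdd_below ((\<lambda>t. \<theta> t i) ` {0..}) \<and>
        (SUP t\<in>{0..}. \<theta> t i) - (INF t\<in>{0..}. \<theta> t i) < 2 * pi)"

lemma continuous_on_order_param:
  assumes "continuous_on UNIV I" "\<And>i. i < N \<Longrightarrow> continuous_on A (\<lambda>t. \<theta> t i)"
  shows "continuous_on A (\<lambda>t. order_param I N (\<theta> t))"
  unfolding order_param_def divide_inverse
  by (intro continuous_intros continuous_on_compose2[OF assms(1) assms(2)]) auto

lemma stays_coherent_cong:
  assumes "\<And>t i. 0 \<le> t \<Longrightarrow> i < N \<Longrightarrow> \<theta> t i = \<eta> t i"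
  shows "stays_coherent I N c \<theta> \<longleftrightarrow> stays_coherent I N c \<eta>"
proof -
  have "order_param I N (\<theta> t) = order_param I N (\<eta> t)" if "0 \<le> t" for t
    unfolding order_param_def using assms that by simp
  moreover have "(\<lambda>t. \<theta> t i) ` {0..} = (\<lambda>t. \<eta> t i) ` {0..}" if "i < N" for i
    using assms that by (intro image_cong) auto
  ultimately show ?thesis
    unfolding stays_coherent_def by (metis atLeast_iff)
qed

lemma stays_coherent_iff_rat:
  assumes "continuous_on UNIV I" and cont: "\<And>i. i < N \<Longrightarrow> continuous_on {0..} (\<lambda>t. \<theta> t i)"
  shows "stays_coherent I N c \<theta> \<longleftrightarrow>
    (\<forall>n::nat. \<exists>m::nat. \<forall>q::rat. real_of_rat q \<in> {0..real n} \<longrightarrow>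
       c + 1 / real (Suc m) \<le> order_param I N (\<theta> (real_of_rat q))) \<and>
    (\<forall>i<N. \<exists>a b :: rat. real_of_rat b - real_of_rat a < 2 * pi \<and>
       (\<forall>q::rat. 0 \<le> real_of_rat q \<longrightarrow> real_of_rat a \<le> \<theta> (real_of_rat q) i \<and> \<theta> (real_of_rat q) i \<le> real_of_rat b))"
  unfolding stays_coherent_def
  using continuous_forall_gt_iff_rat[OF continuous_on_order_param[OF assms]]
    continuous_oscillation_lt_iff_rat[OF cont]
  by simp

lemma stays_coherent_set_measurable:
  assumes field: "bounded_lipschitz_field N (kuramoto_field S I N \<omega> \<kappa>) B L"
    and I_cont: "continuous_on UNIV I" and coords: "\<And>j. (\<lambda>x. x j) \<in> borel_measurable M"
  shows "{x0 \<in> space M. \<forall>\<theta>. is_solution S I N \<omega> \<kappa> x0 \<theta> \<longrightarrow> stays_coherent I N c \<theta>} \<in> sets M"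
proof -
  interpret bounded_lipschitz_field N "kuramoto_field S I N \<omega> \<kappa>" B L
    by (rule field)
  have unique: "(\<forall>\<theta>. is_solution S I N \<omega> \<kappa> x0 \<theta> \<longrightarrow> stays_coherent I N c \<theta>) \<longleftrightarrow>
      stays_coherent I N c (flow x0)" for x0
    unfolding is_solution_iff_ode_solution by (rule forall_solutions_iff_flow[OF stays_coherent_cong])
  have flow_meas: "(\<lambda>x. flow x t i) \<in> borel_measurable M" if "0 \<le> t" "i < N" for t i
    by (rule flow_measurable[OF coords that])
  have order_param_meas: "(\<lambda>x. order_param I N (flow x t)) \<in> borel_measurable M" if "0 \<le> t" for t
    unfolding order_param_def using flow_meas[OF that] borel_measurable_continuous_onI[OF I_cont]
    by measurable
  have rat_form: "stays_coherent I N c (flow x0) \<longleftrightarrow>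
      (\<forall>n::nat. \<exists>m::nat. \<forall>q::rat. real_of_rat q \<in> {0..real n} \<longrightarrow>
         c + 1 / real (Suc m) \<le> order_param I N (flow x0 (real_of_rat q))) \<and>
      (\<forall>i<N. \<exists>a b :: rat. real_of_rat b - real_of_rat a < 2 * pi \<and>
         (\<forall>q::rat. 0 \<le> real_of_rat q \<longrightarrow>
            real_of_rat a \<le> flow x0 (real_of_rat q) i \<and> flow x0 (real_of_rat q) i \<le> real_of_rat b))" for x0
    by (rule stays_coherent_iff_rat[OF I_cont flow_continuous_on])
  have "Measurable.pred M (\<lambda>x0. stays_coherent I N c (flow x0))"
    unfolding rat_form
    by (intro pred_intros_logic(3) pred_intros_countable pred_intros_imp' pred_intros_conj1'
        pred_const_le[OF order_param_meas] pred_const_le[OF flow_meas] pred_le_const[OF flow_meas])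
      auto
  thus ?thesis
    unfolding unique by measurable
qed

section \<open>Trapping of the phases\<close>

text \<open>
  \<open>R\<close> stands for \<open>R* = \<integral> I d\<mu>\<close>. The assumptions involving \<open>\<delta>\<close> are what the lower bound on \<open>\<kappa>\<close>
  in the theorem provides (\<open>exists_trapping_width\<close>).
\<close>

locale kuramoto_trapping =
  fixes S I :: "real \<Rightarrow> real" and N :: nat and \<omega> :: "nat \<Rightarrow> real" and \<kappa> :: real
    and \<alpha>0 p q c1 c2 c3 R \<delta> :: real
  assumes S_per: "\<forall>x. S (x + 2 * pi) = S x"
    and I_per: "\<forall>x. I (x + 2 * pi) = I x"
    and I_cont: "continuous_on UNIV I"
    and S_right: "\<forall>\<theta>\<in>{\<alpha>0..pi}. S \<theta> \<le> - c1 * (pi - \<theta>) powr p"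
    and S_left: "\<forall>\<theta>\<in>{-pi..-\<alpha>0}. S \<theta> \<ge> c1 * (\<theta> + pi) powr p"
    and I_bounds: "\<forall>\<theta>\<in>{-pi..pi}. 0 \<le> I \<theta> \<and> I \<theta> \<le> c2 * (pi - \<bar>\<theta>\<bar>) powr q"
    and I_min: "\<forall>\<theta>\<in>{-pi..pi}. \<forall>\<phi>. \<bar>\<phi>\<bar> \<le> max \<bar>\<theta>\<bar> \<alpha>0 \<longrightarrow> I \<phi> \<ge> c3 * I \<theta>"
    and \<alpha>0_pos: "0 < \<alpha>0" and \<delta>_pos: "0 < \<delta>" and \<delta>_less: "\<delta> < pi - \<alpha>0"
    and p_nonneg: "0 \<le> p" and q_nonneg: "0 \<le> q"
    and c1_pos: "0 < c1" and c3_pos: "0 < c3" and R_pos: "0 < R"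
    and I_small_near_pi: "c2 * \<delta> powr q \<le> R / 4"
    and \<omega>_small: "\<And>i. i < N \<Longrightarrow> 4 * \<bar>\<omega> i\<bar> < \<kappa> * c1 * c3 * R * \<delta> powr p"
begin

lemma I_nonneg: "0 \<le> I x"
  using periodic_range[OF I_per] I_bounds by (metis image_iff rangeI)

lemma c2_nonneg: "0 \<le> c2"
proof -
  have "0 \<le> c2 * pi powr q"
    using I_bounds[rule_format, of 0] by simp
  moreover have "0 < pi powr q"
    by simp
  ultimately show ?thesis
    by (simp add: zero_le_mult_iff)
qed

lemma S_upper_arc:
  assumes "x - 2 * pi * of_int k \<in> {\<alpha>0..pi - \<delta>}"
  shows "S x \<le> - (c1 * \<delta> powr p)"
proof -
  define y where "y = x - 2 * pi * of_int k"
  have "S x = S y"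
    using periodic_shift_int[OF S_per, of y k] by (simp add: y_def)
  also have "\<dots> \<le> - c1 * (pi - y) powr p"
    using S_right assms \<delta>_pos by (auto simp: y_def)
  also have "\<dots> \<le> - (c1 * \<delta> powr p)"
    using assms \<delta>_pos p_nonneg c1_pos by (auto simp: y_def intro!: mult_left_mono powr_mono2)
  finally show ?thesis .
qed

lemma S_lower_arc:
  assumes "x - 2 * pi * of_int k \<in> {-pi + \<delta>..-\<alpha>0}"
  shows "c1 * \<delta> powr p \<le> S x"
proof -
  define y where "y = x - 2 * pi * of_int k"
  have "c1 * \<delta> powr p \<le> c1 * (y + pi) powr p"
    using assms \<delta>_pos p_nonneg c1_pos by (auto simp: y_def intro!: mult_left_mono powr_mono2)
  also have "\<dots> \<le> S y"
    using S_left assms \<delta>_pos by (auto simp: y_def)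
  also have "S y = S x"
    using periodic_shift_int[OF S_per, of y k] by (simp add: y_def)
  finally show ?thesis .
qed

lemma coupling_pos:
  assumes "i < N"
  shows "0 < \<kappa>"
proof -
  have "0 < c1 * c3 * R * \<delta> powr p"
    using c1_pos c3_pos R_pos \<delta>_pos by simp
  moreover have "0 < \<kappa> * (c1 * c3 * R * \<delta> powr p)"
    using \<omega>_small[OF assms] abs_ge_zero[of "\<omega> i"] by (simp add: mult_ac)
  ultimately show ?thesis
    using zero_less_mult_pos2 by blast
qed

lemma drift_dominates:
  assumes "i < N" and coherent: "c3 * R / 4 < order_param I N \<theta>"
  shows "0 < \<kappa> * order_param I N \<theta>"
    and "\<bar>\<omega> i\<bar> < \<kappa> * order_param I N \<theta> * (c1 * \<delta> powr p)"
proof -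
  have "0 < c3 * R / 4"
    using c3_pos R_pos by simp
  thus "0 < \<kappa> * order_param I N \<theta>"
    using coupling_pos[OF assms(1)] coherent by simp
  have "4 * \<bar>\<omega> i\<bar> < \<kappa> * (c1 * \<delta> powr p) * (c3 * R)"
    using \<omega>_small[OF assms(1)] by (simp add: mult_ac)
  also have "\<dots> \<le> \<kappa> * (c1 * \<delta> powr p) * (4 * order_param I N \<theta>)"
    using coherent coupling_pos[OF assms(1)] c1_pos by (intro mult_left_mono) auto
  finally show "\<bar>\<omega> i\<bar> < \<kappa> * order_param I N \<theta> * (c1 * \<delta> powr p)"
    by (simp add: mult_ac)
qed

lemma field_neg_on_upper_arc:
  assumes "i < N" "c3 * R / 4 < order_param I N \<theta>"
    and "\<theta> i - 2 * pi * of_int k \<in> {\<alpha>0..pi - \<delta>}"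
  shows "kuramoto_field S I N \<omega> \<kappa> \<theta> i < 0"
proof -
  have "\<kappa> * order_param I N \<theta> * S (\<theta> i) \<le> \<kappa> * order_param I N \<theta> * - (c1 * \<delta> powr p)"
    by (rule mult_left_mono[OF S_upper_arc[OF assms(3)] less_imp_le[OF drift_dominates(1)[OF assms(1,2)]]])
  thus ?thesis
    using drift_dominates(2)[OF assms(1,2)] by (simp add: kuramoto_field_order_param)
qed

lemma field_pos_on_lower_arc:
  assumes "i < N" "c3 * R / 4 < order_param I N \<theta>"
    and "\<theta> i - 2 * pi * of_int k \<in> {-pi + \<delta>..-\<alpha>0}"
  shows "0 < kuramoto_field S I N \<omega> \<kappa> \<theta> i"
proof -
  have "\<kappa> * order_param I N \<theta> * (c1 * \<delta> powr p) \<le> \<kappa> * order_param I N \<theta> * S (\<theta> i)"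
    by (rule mult_left_mono[OF S_lower_arc[OF assms(3)] less_imp_le[OF drift_dominates(1)[OF assms(1,2)]]])
  thus ?thesis
    using drift_dominates(2)[OF assms(1,2)] by (simp add: kuramoto_field_order_param)
qed

end

locale kuramoto_trajectory = kuramoto_trapping +
  fixes x0 :: "nat \<Rightarrow> real" and \<theta> :: "real \<Rightarrow> nat \<Rightarrow> real"
  assumes solution: "is_solution S I N \<omega> \<kappa> x0 \<theta>"
    and x0_range: "\<forall>i<N. x0 i \<in> {-pi..pi}"
    and x0_coherent: "R / 2 < order_param I N x0"
begin

lemma N_pos: "0 < N"
  using x0_coherent R_pos by (cases N) (auto simp: order_param_def)

lemma phase_initial: "i < N \<Longrightarrow> \<theta> 0 i = x0 i"
  using solution by (simp add: is_solution_def)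

lemma phase_has_derivative:
  "i < N \<Longrightarrow> 0 \<le> t \<Longrightarrow>
    ((\<lambda>s. \<theta> s i) has_real_derivative kuramoto_field S I N \<omega> \<kappa> (\<theta> t) i) (at t within {0..})"
  using solution by (simp add: is_solution_iff_ode_solution ode_solution_def)

lemma phase_continuous_on: "i < N \<Longrightarrow> continuous_on {0..} (\<lambda>t. \<theta> t i)"
  by (rule has_derivative_continuous_on) (use phase_has_derivative in \<open>auto simp: has_field_derivative_def\<close>)

lemma no_upcrossing:
  assumes "i < N" "0 \<le> a" "a \<le> t" "\<theta> a i \<le> b" "b - 2 * pi * of_int k \<in> {\<alpha>0..pi - \<delta>}"
    and coherent: "\<And>s. a \<le> s \<Longrightarrow> s < t \<Longrightarrow> c3 * R / 4 < order_param I N (\<theta> s)"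
  shows "\<theta> t i \<le> b"
proof (rule barrier_upper[where f="\<lambda>s. \<theta> s i" and X="{0..}"])
  show "continuous_on {a..t} (\<lambda>s. \<theta> s i)"
    by (rule continuous_on_subset[OF phase_continuous_on[OF assms(1)]]) (use assms in auto)
  fix s assume s: "a \<le> s" "s < t" "\<theta> s i = b"
  have "kuramoto_field S I N \<omega> \<kappa> (\<theta> s) i < 0"
    by (rule field_neg_on_upper_arc[OF assms(1) coherent[OF s(1,2)]]) (use s assms(5) in simp)
  moreover have "0 \<le> s"
    using s assms(2) by simp
  ultimately show "\<exists>v<0. ((\<lambda>s. \<theta> s i) has_real_derivative v) (at s within {0..})"
    using phase_has_derivative[OF assms(1)] by blast
qed (use assms in auto)

lemma no_downcrossing:
  assumes "i < N" "0 \<le> a" "a \<le> t" "b \<le> \<theta> a i" "b - 2 * pi * of_int k \<in> {-pi + \<delta>..-\<alpha>0}"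
    and coherent: "\<And>s. a \<le> s \<Longrightarrow> s < t \<Longrightarrow> c3 * R / 4 < order_param I N (\<theta> s)"
  shows "b \<le> \<theta> t i"
proof (rule barrier_lower[where f="\<lambda>s. \<theta> s i" and X="{0..}"])
  show "continuous_on {a..t} (\<lambda>s. \<theta> s i)"
    by (rule continuous_on_subset[OF phase_continuous_on[OF assms(1)]]) (use assms in auto)
  fix s assume s: "a \<le> s" "s < t" "\<theta> s i = b"
  have "0 < kuramoto_field S I N \<omega> \<kappa> (\<theta> s) i"
    by (rule field_pos_on_lower_arc[OF assms(1) coherent[OF s(1,2)]]) (use s assms(5) in simp)
  moreover have "0 \<le> s"
    using s assms(2) by simp
  ultimately show "\<exists>v>0. ((\<lambda>s. \<theta> s i) has_real_derivative v) (at s within {0..})"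
    using phase_has_derivative[OF assms(1)] by blast
qed (use assms in auto)

lemma coupling_lower_bound:
  assumes "j < N" "0 \<le> T"
    and coherent: "\<And>s. 0 \<le> s \<Longrightarrow> s < T \<Longrightarrow> c3 * R / 4 < order_param I N (\<theta> s)"
  shows "c3 * (I (x0 j) - R / 4) \<le> I (\<theta> T j)"
proof (cases "\<bar>x0 j\<bar> \<le> pi - \<delta>")
  case True
  \<comment> \<open>\<open>\<theta> j\<close> cannot leave \<open>[-b, b]\<close>, where \<open>I\<close> is at least \<open>c3 * I (x0 j)\<close>\<close>
  define b where "b = max \<bar>x0 j\<bar> \<alpha>0"
  have "b - 2 * pi * of_int 0 \<in> {\<alpha>0..pi - \<delta>}" "- b - 2 * pi * of_int 0 \<in> {-pi + \<delta>..-\<alpha>0}"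
    using True \<delta>_less by (auto simp: b_def)
  moreover have "\<theta> 0 j \<le> b" "- b \<le> \<theta> 0 j"
    using phase_initial[OF assms(1)] by (auto simp: b_def)
  ultimately have "\<theta> T j \<le> b" "- b \<le> \<theta> T j"
    using no_upcrossing[OF assms(1) order_refl assms(2) _ _ coherent]
      no_downcrossing[OF assms(1) order_refl assms(2) _ _ coherent] by blast+
  hence "c3 * I (x0 j) \<le> I (\<theta> T j)"
    using I_min x0_range assms(1) by (auto simp: b_def)
  moreover have "c3 * (I (x0 j) - R / 4) \<le> c3 * I (x0 j)"
    using c3_pos R_pos by (simp add: algebra_simps)
  ultimately show ?thesis by linarith
next
  case False
  have "I (x0 j) \<le> c2 * (pi - \<bar>x0 j\<bar>) powr q"
    using I_bounds x0_range assms(1) by blast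
  also have "\<dots> \<le> c2 * \<delta> powr q"
    using False x0_range assms(1) by (intro mult_left_mono powr_mono2 q_nonneg c2_nonneg) auto
  finally have "I (x0 j) - R / 4 \<le> 0"
    using I_small_near_pi by linarith
  hence "c3 * (I (x0 j) - R / 4) \<le> 0"
    using c3_pos by (simp add: mult_nonneg_nonpos)
  thus ?thesis
    using I_nonneg[of "\<theta> T j"] by linarith
qed

lemma order_param_step:
  assumes "0 \<le> T" and coherent: "\<And>s. 0 \<le> s \<Longrightarrow> s < T \<Longrightarrow> c3 * R / 4 < order_param I N (\<theta> s)"
  shows "c3 * R / 4 < order_param I N (\<theta> T)"
proof -
  have sum_eq: "(\<Sum>j<N. c3 * (I (x0 j) - R / 4)) = c3 * ((\<Sum>j<N. I (x0 j)) - real N * R / 4)"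
    by (simp add: sum_subtractf flip: sum_distrib_left)
  have "c3 * (order_param I N x0 - R / 4) = (\<Sum>j<N. c3 * (I (x0 j) - R / 4)) / real N"
    unfolding sum_eq order_param_def using N_pos by (simp add: field_simps)
  also have "\<dots> \<le> order_param I N (\<theta> T)"
    unfolding order_param_def using coupling_lower_bound[OF _ assms]
    by (intro divide_right_mono sum_mono) auto
  finally have "c3 * (order_param I N x0 - R / 4) \<le> order_param I N (\<theta> T)" .
  moreover have "c3 * (R / 4) < c3 * (order_param I N x0 - R / 4)"
    using x0_coherent c3_pos by (intro mult_strict_left_mono) auto
  ultimately show ?thesis by simp
qed

lemma order_param_lower_bound: "0 \<le> t \<Longrightarrow> c3 * R / 4 < order_param I N (\<theta> t)"
  by (rule continuous_bootstrap_gt[OF continuous_on_order_param[OF I_cont phase_continuous_on] order_param_step])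

lemma phase_stays_below:
  assumes "i < N" "0 \<le> a" "a \<le> t" "\<theta> a i \<le> b" "b - 2 * pi * of_int k \<in> {\<alpha>0..pi - \<delta>}"
  shows "\<theta> t i \<le> b"
  by (rule no_upcrossing[OF assms]) (use assms(2) order_param_lower_bound in simp)

lemma phase_stays_above:
  assumes "i < N" "0 \<le> a" "a \<le> t" "b \<le> \<theta> a i" "b - 2 * pi * of_int k \<in> {-pi + \<delta>..-\<alpha>0}"
  shows "b \<le> \<theta> t i"
  by (rule no_downcrossing[OF assms]) (use assms(2) order_param_lower_bound in simp)

lemma phase_below_or_above:
  assumes "i < N" "u - 2 * pi * of_int k \<in> {\<alpha>0..pi - \<delta>}" "d - 2 * pi * of_int k' \<in> {-pi + \<delta>..-\<alpha>0}"
    and "u < d"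
  shows "(\<forall>t\<ge>0. \<theta> t i < d) \<or> (\<forall>t\<ge>0. u < \<theta> t i)"
proof (rule ccontr)
  assume "\<not> ?thesis"
  then obtain t0 t1 where "0 \<le> t0" "d \<le> \<theta> t0 i" "0 \<le> t1" "\<theta> t1 i \<le> u"
    by (auto simp: not_less)
  hence "\<theta> (max t0 t1) i \<le> u" "d \<le> \<theta> (max t0 t1) i"
    using phase_stays_below[OF assms(1) _ _ _ assms(2)] phase_stays_above[OF assms(1) _ _ _ assms(3)]
    by auto
  thus False using \<open>u < d\<close> by simp
qed

lemma phase_le_if_initial_le:
  assumes "i < N" "x0 i \<le> b" "b - 2 * pi * of_int k \<in> {\<alpha>0..pi - \<delta>}" "0 \<le> t"
  shows "\<theta> t i \<le> b"
  using phase_stays_below[OF assms(1) order_refl assms(4) _ assms(3)] phase_initial[OF assms(1)] assms(2)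
  by simp

lemma phase_ge_if_initial_ge:
  assumes "i < N" "b \<le> x0 i" "b - 2 * pi * of_int k \<in> {-pi + \<delta>..-\<alpha>0}" "0 \<le> t"
  shows "b \<le> \<theta> t i"
  using phase_stays_above[OF assms(1) order_refl assms(4) _ assms(3)] phase_initial[OF assms(1)] assms(2)
  by simp

text \<open>A phase that starts near the unstable point \<open>pi\<close> slides to one side of it for good.\<close>

lemma phase_range_near_pi:
  assumes "i < N" "pi - \<delta> < x0 i"
  obtains lo hi where "\<And>t. 0 \<le> t \<Longrightarrow> lo \<le> \<theta> t i \<and> \<theta> t i \<le> hi" "hi - lo < 2 * pi"
proof -
  have bounds: "-\<alpha>0 \<le> \<theta> t i" "\<theta> t i \<le> 2 * pi + \<alpha>0" if "0 \<le> t" for t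
    using assms x0_range \<delta>_less \<alpha>0_pos that
    by (auto intro!: phase_ge_if_initial_ge[where k=0] phase_le_if_initial_le[where k=1])
  have "(\<forall>t\<ge>0. \<theta> t i < pi + \<delta>) \<or> (\<forall>t\<ge>0. pi - \<delta> < \<theta> t i)"
    by (rule phase_below_or_above[OF assms(1), of _ 0 _ 1]) (use \<delta>_pos \<delta>_less in auto)
  thus ?thesis
  proof
    assume "\<forall>t\<ge>0. \<theta> t i < pi + \<delta>"
    thus ?thesis
      using bounds \<delta>_less by (intro that[of "-\<alpha>0" "pi + \<delta>"]) (auto intro: less_imp_le)
  next
    assume "\<forall>t\<ge>0. pi - \<delta> < \<theta> t i"
    thus ?thesis
      using bounds \<delta>_less by (intro that[of "pi - \<delta>" "2 * pi + \<alpha>0"]) (auto intro: less_imp_le)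
  qed
qed

lemma phase_range_near_minus_pi:
  assumes "i < N" "x0 i < -pi + \<delta>"
  obtains lo hi where "\<And>t. 0 \<le> t \<Longrightarrow> lo \<le> \<theta> t i \<and> \<theta> t i \<le> hi" "hi - lo < 2 * pi"
proof -
  have bounds: "-2 * pi - \<alpha>0 \<le> \<theta> t i" "\<theta> t i \<le> \<alpha>0" if "0 \<le> t" for t
    using assms x0_range \<delta>_less \<alpha>0_pos that
    by (auto intro!: phase_ge_if_initial_ge[where k="-1"] phase_le_if_initial_le[where k=0])
  have "(\<forall>t\<ge>0. \<theta> t i < -pi + \<delta>) \<or> (\<forall>t\<ge>0. -pi - \<delta> < \<theta> t i)"
    by (rule phase_below_or_above[OF assms(1), of _ "-1" _ 0]) (use \<delta>_pos \<delta>_less in auto)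
  thus ?thesis
  proof
    assume "\<forall>t\<ge>0. \<theta> t i < -pi + \<delta>"
    thus ?thesis
      using bounds \<delta>_less by (intro that[of "-2 * pi - \<alpha>0" "-pi + \<delta>"]) (auto intro: less_imp_le)
  next
    assume "\<forall>t\<ge>0. -pi - \<delta> < \<theta> t i"
    thus ?thesis
      using bounds \<delta>_less by (intro that[of "-pi - \<delta>" "\<alpha>0"]) (auto intro: less_imp_le)
  qed
qed

lemma phase_range:
  assumes "i < N"
  obtains lo hi where "\<And>t. 0 \<le> t \<Longrightarrow> lo \<le> \<theta> t i \<and> \<theta> t i \<le> hi" "hi - lo < 2 * pi"
proof -
  consider "\<bar>x0 i\<bar> \<le> pi - \<delta>" | "pi - \<delta> < x0 i" | "x0 i < -pi + \<delta>"
    by linarith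
  thus ?thesis
  proof cases
    case 1
    have "-pi + \<delta> \<le> \<theta> t i \<and> \<theta> t i \<le> pi - \<delta>" if "0 \<le> t" for t
      using 1 \<delta>_pos \<delta>_less that assms
      by (auto intro!: phase_ge_if_initial_ge[where k=0] phase_le_if_initial_le[where k=0])
    thus ?thesis
      using \<delta>_pos by (intro that[of "-pi + \<delta>" "pi - \<delta>"]) auto
  qed (use phase_range_near_pi[OF assms] phase_range_near_minus_pi[OF assms] that in metis)+
qed

lemma phase_oscillation_lt_2pi:
  assumes "i < N"
  shows "bdd_above ((\<lambda>t. \<theta> t i) ` {0..}) \<and> bdd_below ((\<lambda>t. \<theta> t i) ` {0..}) \<and>
    (SUP t\<in>{0..}. \<theta> t i) - (INF t\<in>{0..}. \<theta> t i) < 2 * pi"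
proof -
  obtain lo hi where bounds: "\<And>t. 0 \<le> t \<Longrightarrow> lo \<le> \<theta> t i \<and> \<theta> t i \<le> hi"
    and width: "hi - lo < 2 * pi"
    using phase_range[OF assms] by metis
  have "{0::real..} \<noteq> {}" by auto
  note range = bounded_range_SUP_INF[OF this, of lo "\<lambda>t. \<theta> t i" hi]
  show ?thesis
    using range bounds width by (auto intro: order.strict_trans1)
qed

lemma trajectory_stays_coherent: "stays_coherent I N (c3 * R / 4) \<theta>"
  unfolding stays_coherent_def using order_param_lower_bound phase_oscillation_lt_2pi by blast

end

lemma (in kuramoto_trapping) solution_stays_coherent:
  assumes "\<forall>i<N. x0 i \<in> {-pi..pi}" "real N * R / 2 < (\<Sum>i<N. I (x0 i))"
    and "is_solution S I N \<omega> \<kappa> x0 \<theta>"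
  shows "stays_coherent I N (c3 * R / 4) \<theta>"
proof -
  have "0 < N"
    using assms(2) by (cases N) auto
  hence "R / 2 < order_param I N x0"
    using assms(2) by (simp add: order_param_def field_simps)
  then interpret kuramoto_trajectory S I N \<omega> \<kappa> \<alpha>0 p q c1 c2 c3 R \<delta> x0 \<theta>
    by unfold_locales (use assms in auto)
  show ?thesis
    by (rule trajectory_stays_coherent)
qed

lemma kappa_threshold_bounds:
  fixes \<alpha>0 p q c1 c2 c3 \<kappa> R \<Omega> :: real
  assumes "\<alpha>0 < pi" "0 < p" "0 < q" "0 < c1" "0 < c2" "0 < c3" "0 < R" "0 \<le> \<Omega>"
    and \<kappa>_big: "max (4 * (4 * c2) powr (p / q) / (c1 * c3) * \<Omega> / R powr (1 + p / q))
        (4 / (c1 * c3 * (pi - \<alpha>0) powr p) * \<Omega> / R) < \<kappa>"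
  shows "0 < \<kappa>" "4 * \<Omega> / (\<kappa> * c1 * c3 * R) < (pi - \<alpha>0) powr p"
    "4 * \<Omega> / (\<kappa> * c1 * c3 * R) < (R / (4 * c2)) powr (p / q)"
proof -
  have "0 \<le> 4 / (c1 * c3 * (pi - \<alpha>0) powr p) * \<Omega> / R"
    using assms by simp
  moreover have second: "4 / (c1 * c3 * (pi - \<alpha>0) powr p) * \<Omega> / R < \<kappa>"
    using \<kappa>_big by simp
  ultimately show "0 < \<kappa>"
    by linarith
  thus "4 * \<Omega> / (\<kappa> * c1 * c3 * R) < (pi - \<alpha>0) powr p"
    using second assms by (simp add: field_simps)
  have "R powr (1 + p / q) = R * R powr (p / q)"
    "(R / (4 * c2)) powr (p / q) = R powr (p / q) / (4 * c2) powr (p / q)"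
    using assms by (simp_all add: powr_add powr_divide)
  hence "4 * (4 * c2) powr (p / q) / (c1 * c3) * \<Omega> / R powr (1 + p / q)
      = 4 / (c1 * c3 * (R / (4 * c2)) powr (p / q)) * \<Omega> / R"
    using assms(4-7) by (simp add: field_simps)
  hence "4 / (c1 * c3 * (R / (4 * c2)) powr (p / q)) * \<Omega> / R < \<kappa>"
    using \<kappa>_big by simp
  thus "4 * \<Omega> / (\<kappa> * c1 * c3 * R) < (R / (4 * c2)) powr (p / q)"
    using \<open>0 < \<kappa>\<close> assms by (simp add: field_simps)
qed

lemma exists_trapping_width:
  fixes \<alpha>0 p q c1 c2 c3 \<kappa> R \<Omega> :: real
  assumes "\<alpha>0 < pi" "0 < p" "0 < q" "0 < c1" "0 < c2" "0 < c3" "0 < R" "0 \<le> \<Omega>"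
    and \<kappa>_big: "max (4 * (4 * c2) powr (p / q) / (c1 * c3) * \<Omega> / R powr (1 + p / q))
        (4 / (c1 * c3 * (pi - \<alpha>0) powr p) * \<Omega> / R) < \<kappa>"
  obtains \<delta> where "0 < \<delta>" "\<delta> < pi - \<alpha>0" "c2 * \<delta> powr q \<le> R / 4"
    "4 * \<Omega> < \<kappa> * c1 * c3 * R * \<delta> powr p"
proof -
  define m where "m = 4 * \<Omega> / (\<kappa> * c1 * c3 * R)"
  define u1 where "u1 = (pi - \<alpha>0) powr p"
  define u2 where "u2 = (R / (4 * c2)) powr (p / q)"
  note threshold = kappa_threshold_bounds[OF assms, folded m_def u1_def u2_def]
  have "0 \<le> m"
    using threshold(1) assms by (simp add: m_def)
  define \<delta> where "\<delta> = ((m + min u1 u2) / 2) powr (1 / p)"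
  have dp: "0 < (m + min u1 u2) / 2" "m < (m + min u1 u2) / 2" "(m + min u1 u2) / 2 < u1"
    "(m + min u1 u2) / 2 < u2"
    using \<open>0 \<le> m\<close> threshold(2,3) by auto
  have \<delta>_powr: "\<delta> powr p = (m + min u1 u2) / 2"
    using dp assms by (simp add: \<delta>_def powr_powr)
  show ?thesis
  proof
    show "0 < \<delta>"
      using dp by (simp add: \<delta>_def)
    have "\<delta> < u1 powr (1 / p)"
      unfolding \<delta>_def using dp assms by (intro powr_less_mono2) auto
    thus "\<delta> < pi - \<alpha>0"
      using assms by (simp add: u1_def powr_powr)
    have "\<delta> powr q < u2 powr (q / p)"
      unfolding \<delta>_def using dp assms by (simp add: powr_powr powr_less_mono2)
    hence "\<delta> powr q < R / (4 * c2)"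
      using assms by (simp add: u2_def powr_powr)
    thus "c2 * \<delta> powr q \<le> R / 4"
      using assms by (simp add: field_simps)
    have "4 * \<Omega> = \<kappa> * c1 * c3 * R * m"
      using threshold(1) assms by (simp add: m_def)
    also have "\<dots> < \<kappa> * c1 * c3 * R * \<delta> powr p"
      unfolding \<delta>_powr using threshold(1) assms dp(2) by (intro mult_strict_left_mono) simp_all
    finally show "4 * \<Omega> < \<kappa> * c1 * c3 * R * \<delta> powr p" .
  qed
qed

lemma kuramoto_trapping_exists:
  fixes S I :: "real \<Rightarrow> real" and \<alpha>0 p q c1 c2 c3 \<kappa> R :: real and N :: nat and \<omega> :: "nat \<Rightarrow> real"
  assumes "\<forall>x. S (x + 2 * pi) = S x" "\<forall>x. I (x + 2 * pi) = I x" "continuous_on UNIV I"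
    and "0 < \<alpha>0" "\<alpha>0 < pi" "0 < p" "0 < q" "0 < c1" "0 < c2" "0 < c3"
    and "\<forall>\<theta>\<in>{\<alpha>0..pi}. S \<theta> \<le> - c1 * (pi - \<theta>) powr p"
    and "\<forall>\<theta>\<in>{-pi..-\<alpha>0}. S \<theta> \<ge> c1 * (\<theta> + pi) powr p"
    and "\<forall>\<theta>\<in>{-pi..pi}. 0 \<le> I \<theta> \<and> I \<theta> \<le> c2 * (pi - \<bar>\<theta>\<bar>) powr q"
    and "\<forall>\<theta>\<in>{-pi..pi}. \<forall>\<phi>. \<bar>\<phi>\<bar> \<le> max \<bar>\<theta>\<bar> \<alpha>0 \<longrightarrow> I \<phi> \<ge> c3 * I \<theta>"
    and "0 < N" "0 < R"
    and \<kappa>_big: "\<kappa> > max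
        (4 * (4 * c2) powr (p / q) / (c1 * c3) * (Max ((\<lambda>i. \<bar>\<omega> i\<bar>) ` {..<N})) / R powr (1 + p / q))
        (4 / (c1 * c3 * (pi - \<alpha>0) powr p) * (Max ((\<lambda>i. \<bar>\<omega> i\<bar>) ` {..<N})) / R)"
  obtains \<delta> where "kuramoto_trapping S I N \<omega> \<kappa> \<alpha>0 p q c1 c2 c3 R \<delta>"
proof -
  have \<omega>_le: "\<bar>\<omega> i\<bar> \<le> Max ((\<lambda>i. \<bar>\<omega> i\<bar>) ` {..<N})" if "i < N" for i
    using that by (intro Max_ge) auto
  hence "0 \<le> Max ((\<lambda>i. \<bar>\<omega> i\<bar>) ` {..<N})"
    using order_trans[OF abs_ge_zero \<omega>_le[of 0]] \<open>0 < N\<close> by simp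
  then obtain \<delta> where \<delta>: "0 < \<delta>" "\<delta> < pi - \<alpha>0" "c2 * \<delta> powr q \<le> R / 4"
    "4 * Max ((\<lambda>i. \<bar>\<omega> i\<bar>) ` {..<N}) < \<kappa> * c1 * c3 * R * \<delta> powr p"
    using exists_trapping_width[OF assms(5-10) \<open>0 < R\<close> _ \<kappa>_big] by blast
  have "4 * \<bar>\<omega> i\<bar> < \<kappa> * c1 * c3 * R * \<delta> powr p" if "i < N" for i
    using \<omega>_le[OF that] \<delta>(4) by linarith
  hence "kuramoto_trapping S I N \<omega> \<kappa> \<alpha>0 p q c1 c2 c3 R \<delta>"
    using assms \<delta> by unfold_locales auto
  thus ?thesis by (rule that)
qed

section \<open>The probability of coherent initial data\<close>

lemma abs_le_sup_norm:
  assumes "bounded (range f)"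
  shows "\<bar>f x\<bar> \<le> sup_norm f"
proof -
  have "bdd_above (range (\<lambda>x. \<bar>f x\<bar>))"
    using assms by (auto simp: bounded_real intro: bdd_aboveI2)
  thus ?thesis
    unfolding sup_norm_def by (rule cSUP_upper[OF UNIV_I])
qed

lemma PiM_component_borel_measurable:
  assumes "(\<lambda>x. x) \<in> borel_measurable M"
  shows "(\<lambda>x. x j) \<in> borel_measurable (PiM A (\<lambda>_. M))"
proof (cases "j \<in> A")
  case True
  thus ?thesis
    using measurable_compose[OF measurable_component_singleton[OF True] assms] by simp
next
  case False
  have "(\<lambda>x. undefined) \<in> borel_measurable (PiM A (\<lambda>_. M))"
    by simp
  thus ?thesis
    by (rule measurable_cong[THEN iffD1, rotated]) (use False in \<open>auto simp: space_PiM PiE_def extensional_def\<close>)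
qed

lemma PiM_components_indep_vars:
  assumes "prob_space M" "A \<noteq> {}"
  shows "prob_space.indep_vars (PiM A (\<lambda>_. M)) (\<lambda>_. M) (\<lambda>i x. x i) A"
proof -
  let ?P = "PiM A (\<lambda>_. M)"
  interpret P: prob_space ?P
    by (rule prob_space_PiM) (use assms(1) in auto)
  show ?thesis
  proof (subst P.indep_vars_iff_distr_eq_PiM'[OF assms(2)])
    show "(\<lambda>x. x i) \<in> measurable ?P M" if "i \<in> A" for i
      using that by (rule measurable_component_singleton)
    have "distr ?P ?P (\<lambda>x. \<lambda>i\<in>A. x i) = distr ?P ?P (\<lambda>x. x)"
      by (rule distr_cong) (auto simp: space_PiM PiE_def extensional_restrict)
    also have "\<dots> = PiM A (\<lambda>i. distr ?P M (\<lambda>x. x i))"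
      using distr_PiM_component[of A "\<lambda>_. M"] assms(1) by (auto simp: distr_id intro!: PiM_cong)
    finally show "distr ?P ?P (\<lambda>x. \<lambda>i\<in>A. x i) = PiM A (\<lambda>i. distr ?P M (\<lambda>x. x i))" .
  qed
qed

lemma iid_sum_below_half_mean:
  assumes "prob_space M" and f_meas: "f \<in> borel_measurable M"
    and f_bounds: "\<And>x. x \<in> space M \<Longrightarrow> 0 \<le> f x \<and> f x \<le> B" and mean_pos: "0 < (\<integral>x. f x \<partial>M)"
    and "0 < N"
  shows "measure (PiM {..<N} (\<lambda>_. M)) {x \<in> space (PiM {..<N} (\<lambda>_. M)).
      (\<Sum>i<N. f (x i)) \<le> real N * (\<integral>x. f x \<partial>M) / 2}
    \<le> exp (- ((\<integral>x. f x \<partial>M)\<^sup>2 * real N / (2 * B\<^sup>2)))"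
proof -
  let ?P = "PiM {..<N} (\<lambda>_. M)" and ?m = "\<integral>x. f x \<partial>M"
  interpret P: prob_space ?P
    by (rule prob_space_PiM) (use assms(1) in auto)
  have "0 < B"
  proof (rule ccontr)
    assume "\<not> 0 < B"
    hence "?m = (\<integral>x. 0 \<partial>M)"
      by (intro Bochner_Integration.integral_cong refl) (use f_bounds in force)
    thus False using mean_pos by simp
  qed
  have component_distr: "distr ?P M (\<lambda>x. x i) = M" if "i < N" for i
    by (rule distr_PiM_component) (use assms(1) that in auto)
  have "P.indep_vars (\<lambda>_. M) (\<lambda>i x. x i) {..<N}"
    using PiM_components_indep_vars[OF assms(1), of "{..<N}"] \<open>0 < N\<close> by auto
  hence indep: "P.indep_vars (\<lambda>_. borel) (\<lambda>i x. f (x i)) {..<N}"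
    by (rule P.indep_vars_compose2) (rule f_meas)
  have expectation: "P.expectation (\<lambda>x. f (x i)) = ?m" if "i < N" for i
    using integral_distr[of "\<lambda>x. x i" ?P M f] component_distr[OF that] f_meas that
    by (simp add: measurable_component_singleton)
  interpret Hoeffding_ineq ?P "{..<N}" "\<lambda>i x. f (x i)" "\<lambda>_. 0" "\<lambda>_. B" "real N * ?m"
  proof unfold_locales
    show "AE x in ?P. f (x i) \<in> {0..B}" if "i \<in> {..<N}" for i
      using f_bounds that by (intro AE_I2) (auto simp: space_PiM)
  qed (simp_all add: indep expectation)
  have "P.prob {x \<in> space ?P. (\<Sum>i<N. f (x i)) \<le> real N * ?m - real N * ?m / 2}
      \<le> exp (-2 * (real N * ?m / 2)\<^sup>2 / (\<Sum>i<N. (B - 0)\<^sup>2))"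
    using mean_pos \<open>0 < B\<close> \<open>0 < N\<close> by (intro Hoeffding_ineq_le) auto
  also have "-2 * (real N * ?m / 2)\<^sup>2 / (\<Sum>i<N. (B - 0)\<^sup>2) = - (?m\<^sup>2 * real N / (2 * B\<^sup>2))"
    using \<open>0 < N\<close> \<open>0 < B\<close> by (simp add: power2_eq_square field_simps)
  finally show ?thesis
    by simp
qed

lemma measure_ge_if_sum_above_half_mean:
  assumes "prob_space M" "f \<in> borel_measurable M"
    and "\<And>x. x \<in> space M \<Longrightarrow> 0 \<le> f x \<and> f x \<le> B" "0 < (\<integral>x. f x \<partial>M)" "0 < N"
    and "G \<in> sets (PiM {..<N} (\<lambda>_. M))"
    and above_in_G: "\<And>x. x \<in> space (PiM {..<N} (\<lambda>_. M)) \<Longrightarrow>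
      real N * (\<integral>x. f x \<partial>M) / 2 < (\<Sum>i<N. f (x i)) \<Longrightarrow> x \<in> G"
  shows "1 - exp (- ((\<integral>x. f x \<partial>M)\<^sup>2 * real N / (2 * B\<^sup>2))) \<le> measure (PiM {..<N} (\<lambda>_. M)) G"
proof -
  let ?P = "PiM {..<N} (\<lambda>_. M)"
  let ?below = "{x \<in> space ?P. (\<Sum>i<N. f (x i)) \<le> real N * (\<integral>x. f x \<partial>M) / 2}"
  interpret P: prob_space ?P
    by (rule prob_space_PiM) (use assms(1) in auto)
  have "?below \<in> sets ?P"
    using assms(2) by measurable
  hence "measure ?P (space ?P - ?below) = 1 - measure ?P ?below"
    by (rule P.prob_compl)
  moreover have "space ?P - ?below \<subseteq> G"
  proof
    fix x assume "x \<in> space ?P - ?below"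
    thus "x \<in> G"
      using above_in_G[of x] by (simp add: not_le)
  qed
  hence "measure ?P (space ?P - ?below) \<le> measure ?P G"
    by (rule P.finite_measure_mono[OF _ assms(6)])
  ultimately show ?thesis
    using iid_sum_below_half_mean[OF assms(1-5)] by linarith
qed

theorem theorem2p12:
  fixes S I :: "real \<Rightarrow> real" and \<alpha>0 p q c1 c2 c3 \<kappa> :: real
    and N :: nat and \<omega> :: "nat \<Rightarrow> real" and \<mu> :: "real measure"
  assumes S_per: "\<forall>x. S (x + 2 * pi) = S x"
    and I_per: "\<forall>x. I (x + 2 * pi) = I x"
    and S_lip: "\<exists>L. L-lipschitz_on UNIV S"
    and I_lip: "\<exists>L. L-lipschitz_on UNIV I"
    and \<alpha>0: "0 < \<alpha>0" "\<alpha>0 < pi"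
    and pq: "p \<ge> 1" "q \<ge> 1"
    and cs: "c1 > 0" "c2 > 0" "0 < c3" "c3 \<le> 1"
    and S_right: "\<forall>\<theta>\<in>{\<alpha>0..pi}. S \<theta> \<le> - c1 * (pi - \<theta>) powr p"
    and S_left: "\<forall>\<theta>\<in>{-pi..-\<alpha>0}. S \<theta> \<ge> c1 * (\<theta> + pi) powr p"
    and I_bounds: "\<forall>\<theta>\<in>{-pi..pi}. 0 \<le> I \<theta> \<and> I \<theta> \<le> c2 * (pi - \<bar>\<theta>\<bar>) powr q"
    and I_min: "\<forall>\<theta>\<in>{-pi..pi}. \<forall>\<phi>. \<bar>\<phi>\<bar> \<le> max \<bar>\<theta>\<bar> \<alpha>0 \<longrightarrow> I \<phi> \<ge> c3 * I \<theta>"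
    and N: "N \<ge> 1"
    and \<mu>_prob: "prob_space \<mu>"
    and \<mu>_space: "space \<mu> = {-pi..pi}"
    and \<mu>_sets: "sets \<mu> = sets (restrict_space borel {-pi..pi})"
    and Rstar_pos: "(\<integral>\<theta>. I \<theta> \<partial>\<mu>) > 0"
    and \<kappa>_big: "\<kappa> > max
        (4 * (4 * c2) powr (p / q) / (c1 * c3) * (Max ((\<lambda>i. \<bar>\<omega> i\<bar>) ` {..<N}))
           / (\<integral>\<theta>. I \<theta> \<partial>\<mu>) powr (1 + p / q))
        (4 / (c1 * c3 * (pi - \<alpha>0) powr p) * (Max ((\<lambda>i. \<bar>\<omega> i\<bar>) ` {..<N}))
           / (\<integral>\<theta>. I \<theta> \<partial>\<mu>))"
  shows "measure (PiM {..<N} (\<lambda>_. \<mu>))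
      {x0 \<in> space (PiM {..<N} (\<lambda>_. \<mu>)).
         \<forall>\<theta>. is_solution S I N \<omega> \<kappa> x0 \<theta> \<longrightarrow>
           (\<forall>t\<ge>0. order_param I N (\<theta> t) > c3 * (\<integral>\<theta>. I \<theta> \<partial>\<mu>) / 4) \<and>
           (\<forall>i<N. bdd_above ((\<lambda>t. \<theta> t i) ` {0..}) \<and> bdd_below ((\<lambda>t. \<theta> t i) ` {0..}) \<and>
              (SUP t\<in>{0..}. \<theta> t i) - (INF t\<in>{0..}. \<theta> t i) < 2 * pi)}
    \<ge> 1 - exp (- ((\<integral>\<theta>. I \<theta> \<partial>\<mu>)\<^sup>2 * real N / (2 * (sup_norm I)\<^sup>2)))"
proof -
  define R where "R = (\<integral>\<theta>. I \<theta> \<partial>\<mu>)"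
  let ?coherent = "{x0 \<in> space (PiM {..<N} (\<lambda>_. \<mu>)).
    \<forall>\<theta>. is_solution S I N \<omega> \<kappa> x0 \<theta> \<longrightarrow> stays_coherent I N (c3 * R / 4) \<theta>}"
  have I_cont: "continuous_on UNIV I"
    using I_lip lipschitz_on_continuous_on by blast
  obtain B L where field: "bounded_lipschitz_field N (kuramoto_field S I N \<omega> \<kappa>) B L"
    using periodic_lipschitz_kuramoto_field[OF S_per I_per] S_lip I_lip by metis
  obtain \<delta> where "kuramoto_trapping S I N \<omega> \<kappa> \<alpha>0 p q c1 c2 c3 R \<delta>"
    using kuramoto_trapping_exists[OF S_per I_per I_cont \<alpha>0 _ _ cs(1-3) S_right S_left I_bounds I_min
        _ Rstar_pos \<kappa>_big] pq N unfolding R_def by force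
  then interpret kuramoto_trapping S I N \<omega> \<kappa> \<alpha>0 p q c1 c2 c3 R \<delta> .
  have "(\<lambda>x. x) \<in> borel_measurable \<mu>"
    using measurable_restrict_space1[of "\<lambda>x. x" borel borel "{-pi..pi}"]
    by (simp add: measurable_cong_sets[OF \<mu>_sets refl])
  hence I_meas: "I \<in> borel_measurable \<mu>" and "?coherent \<in> sets (PiM {..<N} (\<lambda>_. \<mu>))"
    using borel_measurable_continuous_onI[OF I_cont]
    by (auto intro: measurable_compose stays_coherent_set_measurable[OF field I_cont PiM_component_borel_measurable])
  moreover have "x \<in> ?coherent" if "x \<in> space (PiM {..<N} (\<lambda>_. \<mu>))" "real N * R / 2 < (\<Sum>i<N. I (x i))" for x
    using that \<mu>_space solution_stays_coherent[of x] by (auto simp: space_PiM PiE_iff)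
  moreover have "0 \<le> I x \<and> I x \<le> sup_norm I" for x
    using I_nonneg abs_le_sup_norm[OF periodic_continuous_bounded[OF I_cont I_per]] by simp
  ultimately show ?thesis
    using measure_ge_if_sum_above_half_mean[OF \<mu>_prob I_meas _ Rstar_pos] N
    unfolding stays_coherent_def R_def by simp
qed

end
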